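(* Let $N$ be a binary tree-based network, and let $O$ and $R$ be the sets of omnians and reticulations of $N$. Then $$|Sup(N)|=2^c\cdot\prod_{P\in\pi(\mathcal{B}_N)}\tfrac12\bigl(v(P)+3\bigr),$$ where $c$ is the number of connected components of $\mathcal{B}_N$ that are cycles, $\pi(\mathcal{B}_N)$ is the set of connected components of $\mathcal{B}_N$ that are paths both of whose end vertices lie in $R$, and $v(P)$ is the number of vertices of $P$.
   Context: A phylogenetic network on a nonempty finite set $X$ is a rooted acyclic digraph with no parallel arcs such that: the unique root has out-degree at least one; $X$ is exactly the set of vertices of out-degree zero (leaves), each of in-degree one; every other vertex either has in-degree one and out-degree at least two (a tree vertex) or in-degree at least two and out-degree one (a reticulation). It is binary if every tree vertex has out-degree two and every reticulation has in-degree two. An omnian is a non-leaf vertex all of whose children are reticulations (an omnian may be a reticulation). $N$ is tree-based if it has a spanning tree rooted at the root of $N$ all of whose leaves lie in $X$; a support tree for $N$ is such a spanning tree, i.e., a subgraph of $N$ containing all vertices of $N$ that is a directed tree rooted at the root of $N$ whose leaf set is exactly $X$. $Sup(N)$ denotes the set of support trees for $N$ (distinguished by their arc sets). $\mathcal{B}_N$ is the bipartite graph with vertex bipartition $\{O,R\}$ (as disjoint copies) and an edge $\{o,r\}$ for each arc $(o,r)$ of $N$ with $o\in O$, $r\in R$. *)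

theory Defs
  imports Complex_Main
begin

text \<open>A directed graph is given by a finite vertex set V and an arc set A (a set of
  ordered pairs, so no parallel arcs). N = (V, A, rho, X).\<close>

definition indeg :: "('a \<times> 'a) set \<Rightarrow> 'a \<Rightarrow> nat" where
  "indeg A v = card {u. (u, v) \<in> A}"

definition outdeg :: "('a \<times> 'a) set \<Rightarrow> 'a \<Rightarrow> nat" where
  "outdeg A v = card {w. (v, w) \<in> A}"

definition phylo_network :: "'a set \<Rightarrow> ('a \<times> 'a) set \<Rightarrow> 'a \<Rightarrow> 'a set \<Rightarrow> bool" where
  "phylo_network V A rho X \<longleftrightarrow>
     finite V \<and> A \<subseteq> V \<times> V \<and> acyclic A \<and> X \<noteq> {} \<and>
     rho \<in> V \<and> indeg A rho = 0 \<and> (\<forall>v\<in>V. v \<noteq> rho \<longrightarrow> (rho, v) \<in> A\<^sup>+) \<and>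
     outdeg A rho \<ge> 1 \<and>
     X = {v \<in> V. outdeg A v = 0} \<and>
     (\<forall>x\<in>X. indeg A x = 1) \<and>
     (\<forall>v \<in> V - X - {rho}. (indeg A v = 1 \<and> outdeg A v \<ge> 2) \<or> (indeg A v \<ge> 2 \<and> outdeg A v = 1))"

definition tree_vertices :: "'a set \<Rightarrow> ('a \<times> 'a) set \<Rightarrow> 'a \<Rightarrow> 'a set \<Rightarrow> 'a set" where
  "tree_vertices V A rho X = {v \<in> V - X - {rho}. indeg A v = 1 \<and> outdeg A v \<ge> 2}"

definition reticulations :: "'a set \<Rightarrow> ('a \<times> 'a) set \<Rightarrow> 'a \<Rightarrow> 'a set \<Rightarrow> 'a set" where
  "reticulations V A rho X = {v \<in> V - X - {rho}. indeg A v \<ge> 2 \<and> outdeg A v = 1}"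

definition binary_network :: "'a set \<Rightarrow> ('a \<times> 'a) set \<Rightarrow> 'a \<Rightarrow> 'a set \<Rightarrow> bool" where
  "binary_network V A rho X \<longleftrightarrow> phylo_network V A rho X \<and>
     (\<forall>v \<in> tree_vertices V A rho X. outdeg A v = 2) \<and>
     (\<forall>v \<in> reticulations V A rho X. indeg A v = 2)"

definition omnians :: "'a set \<Rightarrow> ('a \<times> 'a) set \<Rightarrow> 'a \<Rightarrow> 'a set \<Rightarrow> 'a set" where
  "omnians V A rho X = {v \<in> V - X. \<forall>w. (v, w) \<in> A \<longrightarrow> w \<in> reticulations V A rho X}"

definition support_tree :: "'a set \<Rightarrow> ('a \<times> 'a) set \<Rightarrow> 'a \<Rightarrow> 'a set \<Rightarrow> ('a \<times> 'a) set \<Rightarrow> bool" where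
  "support_tree V A rho X T \<longleftrightarrow> T \<subseteq> A \<and>
     indeg T rho = 0 \<and>
     (\<forall>v\<in>V. v \<noteq> rho \<longrightarrow> indeg T v = 1 \<and> (rho, v) \<in> T\<^sup>+) \<and>
     {v \<in> V. outdeg T v = 0} = X"

definition Sup :: "'a set \<Rightarrow> ('a \<times> 'a) set \<Rightarrow> 'a \<Rightarrow> 'a set \<Rightarrow> ('a \<times> 'a) set set" where
  "Sup V A rho X = {T. support_tree V A rho X T}"

definition tree_based :: "'a set \<Rightarrow> ('a \<times> 'a) set \<Rightarrow> 'a \<Rightarrow> 'a set \<Rightarrow> bool" where
  "tree_based V A rho X \<longleftrightarrow> phylo_network V A rho X \<and> Sup V A rho X \<noteq> {}"

text \<open>The bipartite graph B_N: vertices Inl o (o an omnian) and Inr r (r a reticulation),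
  undirected edges {Inl o, Inr r} for arcs (o, r) of N.\<close>
definition BN_vertices :: "'a set \<Rightarrow> ('a \<times> 'a) set \<Rightarrow> 'a \<Rightarrow> 'a set \<Rightarrow> ('a + 'a) set" where
  "BN_vertices V A rho X = Inl ` omnians V A rho X \<union> Inr ` reticulations V A rho X"

definition BN_edges :: "'a set \<Rightarrow> ('a \<times> 'a) set \<Rightarrow> 'a \<Rightarrow> 'a set \<Rightarrow> ('a + 'a) set set" where
  "BN_edges V A rho X = {{Inl o', Inr r} | o' r. (o', r) \<in> A \<and>
      o' \<in> omnians V A rho X \<and> r \<in> reticulations V A rho X}"

definition BN_adj :: "'a set \<Rightarrow> ('a \<times> 'a) set \<Rightarrow> 'a \<Rightarrow> 'a set \<Rightarrow> ('a + 'a) rel" where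
  "BN_adj V A rho X = {(x, y). {x, y} \<in> BN_edges V A rho X}"

definition BN_components :: "'a set \<Rightarrow> ('a \<times> 'a) set \<Rightarrow> 'a \<Rightarrow> 'a set \<Rightarrow> ('a + 'a) set set" where
  "BN_components V A rho X = BN_vertices V A rho X //
     ((BN_adj V A rho X)\<^sup>* \<inter> (BN_vertices V A rho X \<times> BN_vertices V A rho X))"

text \<open>The component with vertex set C (the subgraph induced on C) is a path with vertex
  sequence ps (possibly a single vertex), resp. a cycle with cyclic vertex sequence ps.\<close>
definition is_path_seq :: "'b set set \<Rightarrow> 'b set \<Rightarrow> 'b list \<Rightarrow> bool" where
  "is_path_seq E C ps \<longleftrightarrow> ps \<noteq> [] \<and> distinct ps \<and> set ps = C \<and>
     (\<forall>x\<in>C. \<forall>y\<in>C. {x, y} \<in> E \<longleftrightarrow>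
        (\<exists>i. Suc i < length ps \<and> {x, y} = {ps ! i, ps ! Suc i}))"

definition is_cycle_seq :: "'b set set \<Rightarrow> 'b set \<Rightarrow> 'b list \<Rightarrow> bool" where
  "is_cycle_seq E C ps \<longleftrightarrow> length ps \<ge> 3 \<and> distinct ps \<and> set ps = C \<and>
     (\<forall>x\<in>C. \<forall>y\<in>C. {x, y} \<in> E \<longleftrightarrow>
        (\<exists>i < length ps. {x, y} = {ps ! i, ps ! ((Suc i) mod length ps)}))"

definition BN_cycle_components :: "'a set \<Rightarrow> ('a \<times> 'a) set \<Rightarrow> 'a \<Rightarrow> 'a set \<Rightarrow> ('a + 'a) set set" where
  "BN_cycle_components V A rho X = {C \<in> BN_components V A rho X.
      \<exists>ps. is_cycle_seq (BN_edges V A rho X) C ps}"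

definition BN_RR_paths :: "'a set \<Rightarrow> ('a \<times> 'a) set \<Rightarrow> 'a \<Rightarrow> 'a set \<Rightarrow> ('a + 'a) set set" where
  "BN_RR_paths V A rho X = {C \<in> BN_components V A rho X.
      \<exists>ps. is_path_seq (BN_edges V A rho X) C ps \<and>
           hd ps \<in> Inr ` reticulations V A rho X \<and> last ps \<in> Inr ` reticulations V A rho X}"

end

theory Submission
  imports Defs "HOL-Library.FuncSet"
begin

text \<open>A support tree must keep every arc of \<open>N\<close> except that each reticulation keeps exactly
  one incoming arc, and the result is a support tree precisely when every omnian keeps an
  outgoing arc. So support trees correspond to choices of one parent for each reticulation
  such that every omnian is chosen by one of its children. These constraints only relate a
  reticulation to its omnian parents, i.e. they live on the edges of \<open>B_N\<close>, so the count is
  a product over the components of \<open>B_N\<close>. Omnians have at most two children and reticulations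
  exactly two parents, hence every component is a path or a cycle. Along a path
  \<open>r\<^sub>0 o\<^sub>0 r\<^sub>1 \<dots> o\<^sub>m\<^sub>-\<^sub>1 r\<^sub>m\<close> the admissible choices are the \<open>m + 2\<close> thresholds
  (\<open>r\<^sub>j\<close> picks \<open>o\<^sub>j\<close> below the threshold and its other parent from there on), on a cycle they
  are the two orientations, and a path with an omnian at one end admits at most one choice,
  so exactly one because \<open>N\<close> is tree-based.\<close>

section \<open>Connected graphs of maximum degree two\<close>

definition path_in :: "'b set set \<Rightarrow> 'b set \<Rightarrow> 'b list \<Rightarrow> bool" where
  "path_in E C ps \<longleftrightarrow> ps \<noteq> [] \<and> distinct ps \<and> set ps \<subseteq> C \<and>
     (\<forall>i. Suc i < length ps \<longrightarrow> {ps ! i, ps ! Suc i} \<in> E)"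

lemma exists_longest_path_in:
  assumes "finite C" and "x \<in> C"
  obtains ps where "path_in E C ps" and "\<And>qs. path_in E C qs \<Longrightarrow> length qs \<le> length ps"
proof -
  have "path_in E C [x]" using assms(2) by (simp add: path_in_def)
  moreover have "\<forall>qs. path_in E C qs \<longrightarrow> length qs < Suc (card C)"
  proof (intro allI impI)
    fix qs assume "path_in E C qs"
    then have "card (set qs) \<le> card C" "distinct qs"
      using card_mono[OF assms(1)] by (auto simp: path_in_def)
    then show "length qs < Suc (card C)" by (simp add: distinct_card)
  qed
  ultimately obtain ps where "path_in E C ps" "\<forall>qs. path_in E C qs \<longrightarrow> length qs \<le> length ps"
    using Lattices_Big.ex_has_greatest_nat[where P = "path_in E C" and f = length] by blast
  then show ?thesis using that by blast
qed

lemma longest_path_in_end_neighbours: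
  assumes closed: "\<And>x y. x \<in> C \<Longrightarrow> {x, y} \<in> E \<Longrightarrow> y \<in> C"
    and ps: "path_in E C ps" and longest: "\<And>qs. path_in E C qs \<Longrightarrow> length qs \<le> length ps"
  shows "{hd ps, z} \<in> E \<Longrightarrow> z \<in> set ps" and "{last ps, z} \<in> E \<Longrightarrow> z \<in> set ps"
proof -
  have ne: "ps \<noteq> []" and dist: "distinct ps" and sub: "set ps \<subseteq> C"
    and adj: "\<And>i. Suc i < length ps \<Longrightarrow> {ps ! i, ps ! Suc i} \<in> E"
    using ps by (auto simp: path_in_def)
  show "z \<in> set ps" if e: "{hd ps, z} \<in> E"
  proof (rule ccontr)
    assume z: "z \<notin> set ps"
    have "z \<in> C" using closed[OF _ e] sub hd_in_set[OF ne] by auto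
    have "path_in E C (z # ps)" unfolding path_in_def
    proof (intro conjI allI impI)
      fix i assume "Suc i < length (z # ps)"
      then show "{(z # ps) ! i, (z # ps) ! Suc i} \<in> E"
        using e adj ne by (cases i) (auto simp: hd_conv_nth insert_commute)
    qed (use z dist sub \<open>z \<in> C\<close> in auto)
    from longest[OF this] show False by simp
  qed
  show "z \<in> set ps" if e: "{last ps, z} \<in> E"
  proof (rule ccontr)
    assume z: "z \<notin> set ps"
    have "z \<in> C" using closed[OF _ e] sub last_in_set[OF ne] by auto
    have "path_in E C (ps @ [z])" unfolding path_in_def
    proof (intro conjI allI impI)
      fix i assume i: "Suc i < length (ps @ [z])"
      show "{(ps @ [z]) ! i, (ps @ [z]) ! Suc i} \<in> E"
      proof (cases "Suc i < length ps")
        case False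
        then have "i = length ps - 1" using i by simp
        then show ?thesis using e ne by (simp add: nth_append last_conv_nth)
      qed (simp add: nth_append adj)
    qed (use z dist sub \<open>z \<in> C\<close> in auto)
    from longest[OF this] show False by simp
  qed
qed

lemma degree_le_2_third_neighbour:
  assumes "finite {y. {x, y} \<in> E}" and "card {y. {x, y} \<in> E} \<le> 2"
    and "{x, a} \<in> E" "{x, b} \<in> E" "{x, z} \<in> E" "a \<noteq> b"
  shows "z = a \<or> z = b"
proof (rule ccontr)
  assume "\<not> ?thesis"
  then have "card {a, b, z} = 3" using assms(6) by auto
  moreover have "card {a, b, z} \<le> card {y. {x, y} \<in> E}" using assms by (intro card_mono) auto
  ultimately show False using assms(2) by linarith
qed

lemma degree_le_2_path_in_saturated:
  assumes ps: "path_in E C ps"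
    and fin: "\<And>x. finite {y. {x, y} \<in> E}" and deg: "\<And>x. card {y. {x, y} \<in> E} \<le> 2"
    and hd_nb: "\<And>z. {hd ps, z} \<in> E \<Longrightarrow> z \<in> set ps"
    and last_nb: "\<And>z. {last ps, z} \<in> E \<Longrightarrow> z \<in> set ps"
  shows "x \<in> set ps \<Longrightarrow> {x, z} \<in> E \<Longrightarrow> z \<in> set ps"
    and "a < b \<Longrightarrow> b < length ps \<Longrightarrow> {ps ! a, ps ! b} \<in> E \<Longrightarrow>
           b = Suc a \<or> (a = 0 \<and> b = length ps - 1)"
proof -
  define n where "n = length ps"
  have ne: "ps \<noteq> []" and adj: "\<And>i. Suc i < n \<Longrightarrow> {ps ! i, ps ! Suc i} \<in> E"
    and inj: "\<And>i j. i < n \<Longrightarrow> j < n \<Longrightarrow> ps ! i = ps ! j \<longleftrightarrow> i = j"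
    using ps by (auto simp: path_in_def n_def nth_eq_iff_index_eq)
  have inner: "z = ps ! (i - 1) \<or> z = ps ! Suc i" if "0 < i" "Suc i < n" "{ps ! i, z} \<in> E" for i z
  proof (rule degree_le_2_third_neighbour[OF fin deg _ _ that(3)])
    show "{ps ! i, ps ! (i - 1)} \<in> E" using adj[of "i - 1"] that by (simp add: insert_commute)
    show "{ps ! i, ps ! Suc i} \<in> E" using adj that by simp
    show "ps ! (i - 1) \<noteq> ps ! Suc i" using inj that by simp
  qed
  show "z \<in> set ps" if x: "x \<in> set ps" and e: "{x, z} \<in> E"
  proof -
    obtain i where i: "i < n" "ps ! i = x" using x by (auto simp: in_set_conv_nth n_def)
    consider "i = 0" | "i = n - 1" | "0 < i" "Suc i < n" using i(1) by linarith
    then show ?thesis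
    proof cases
      case 1 then show ?thesis using hd_nb e i ne by (simp add: hd_conv_nth)
    next
      case 2 then show ?thesis using last_nb e i ne by (simp add: last_conv_nth n_def)
    next
      case 3
      have "z = ps ! (i - 1) \<or> z = ps ! Suc i" using inner[OF 3, of z] e i(2) by simp
      then show ?thesis using 3 by (auto simp: n_def)
    qed
  qed
  show "b = Suc a \<or> (a = 0 \<and> b = length ps - 1)"
    if ab: "a < b" "b < length ps" and e: "{ps ! a, ps ! b} \<in> E"
  proof (rule ccontr)
    assume chord: "\<not> ?thesis"
    have a0: "a = 0"
    proof (rule ccontr)
      assume "a \<noteq> 0"
      moreover have "Suc a < n" using ab chord n_def by linarith
      ultimately have "ps ! b = ps ! (a - 1) \<or> ps ! b = ps ! Suc a"
        using inner[of a "ps ! b"] e by simp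
      moreover have "b \<noteq> a - 1" "b \<noteq> Suc a" using ab chord by auto
      moreover have "b < n" "a - 1 < n" using ab n_def by auto
      ultimately show False using inj[of b "a - 1"] inj[of b "Suc a"] \<open>Suc a < n\<close> by auto
    qed
    then have "Suc b < n" "0 < b" using chord ab n_def by auto
    then have "ps ! 0 = ps ! (b - 1) \<or> ps ! 0 = ps ! Suc b"
      using inner[of b "ps ! 0"] e a0 by (simp add: insert_commute)
    moreover have "ps ! 0 \<noteq> ps ! (b - 1)"
      using inj[of 0 "b - 1"] chord a0 \<open>Suc b < n\<close> \<open>0 < b\<close> by simp
    moreover have "ps ! 0 \<noteq> ps ! Suc b" using inj[of 0 "Suc b"] \<open>Suc b < n\<close> by simp
    ultimately show False by blast
  qed
qed

lemma path_or_cycle_by_chords: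
  assumes ne: "ps \<noteq> []" and dist: "distinct ps" and C: "set ps = C"
    and adj: "\<And>i. Suc i < length ps \<Longrightarrow> {ps ! i, ps ! Suc i} \<in> E"
    and chords: "\<And>a b. a < b \<Longrightarrow> b < length ps \<Longrightarrow> {ps ! a, ps ! b} \<in> E \<Longrightarrow>
                   b = Suc a \<or> (a = 0 \<and> b = length ps - 1)"
    and noloop: "\<And>x. {x} \<notin> E"
  shows "is_path_seq E C ps \<or> is_cycle_seq E C ps"
proof -
  define n where "n = length ps"
  have positions: "\<exists>a b. a < b \<and> b < n \<and> {x, y} = {ps ! a, ps ! b}"
    if xy: "x \<in> C" "y \<in> C" and e: "{x, y} \<in> E" for x y
  proof -
    obtain a b where ab: "a < n" "ps ! a = x" "b < n" "ps ! b = y"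
      using xy C by (auto simp: in_set_conv_nth n_def)
    have "a \<noteq> b" using ab e noloop[of x] by auto
    then consider "a < b" | "b < a" by linarith
    then show ?thesis
    proof cases
      case 1 then show ?thesis using ab by blast
    next
      case 2 then show ?thesis using ab by (metis insert_commute)
    qed
  qed
  show ?thesis
  proof (cases "3 \<le> n \<and> {ps ! 0, ps ! (n - 1)} \<in> E")
    case True
    have "{x, y} \<in> E \<longleftrightarrow> (\<exists>i<n. {x, y} = {ps ! i, ps ! (Suc i mod n)})"
      if xy_in: "x \<in> C" "y \<in> C" for x y
    proof
      assume e: "{x, y} \<in> E"
      then obtain a b where ab: "a < b" "b < n" and xy: "{x, y} = {ps ! a, ps ! b}"
        using positions[OF xy_in e] by blast
      from chords[OF ab[unfolded n_def]] e xy have "b = Suc a \<or> (a = 0 \<and> b = n - 1)"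
        by (simp add: n_def)
      then show "\<exists>i<n. {x, y} = {ps ! i, ps ! (Suc i mod n)}"
      proof
        assume "b = Suc a" then show ?thesis using ab xy by (intro exI[of _ a]) simp
      next
        assume "a = 0 \<and> b = n - 1"
        then have "{x, y} = {ps ! (n - 1), ps ! (Suc (n - 1) mod n)}"
          using ab xy by (simp add: insert_commute)
        moreover have "n - 1 < n" using ab by simp
        ultimately show ?thesis by blast
      qed
    next
      assume "\<exists>i<n. {x, y} = {ps ! i, ps ! (Suc i mod n)}"
      then obtain i where i: "i < n" and xy: "{x, y} = {ps ! i, ps ! (Suc i mod n)}" by blast
      show "{x, y} \<in> E"
      proof (cases "Suc i < n")
        case True then show ?thesis using xy adj n_def by simp
      next
        case False
        then have "Suc i = n" using i by simp
        then have "i = n - 1" "Suc i mod n = 0" by auto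
        then show ?thesis using xy True by (simp add: insert_commute)
      qed
    qed
    then have "is_cycle_seq E C ps" unfolding is_cycle_seq_def n_def[symmetric] using True dist C by blast
    then show ?thesis ..
  next
    case False
    have "{x, y} \<in> E \<longleftrightarrow> (\<exists>i. Suc i < n \<and> {x, y} = {ps ! i, ps ! Suc i})"
      if xy_in: "x \<in> C" "y \<in> C" for x y
    proof
      assume e: "{x, y} \<in> E"
      then obtain a b where ab: "a < b" "b < n" and xy: "{x, y} = {ps ! a, ps ! b}"
        using positions[OF xy_in e] by blast
      from chords[OF ab[unfolded n_def]] e xy have "b = Suc a \<or> (a = 0 \<and> b = n - 1)"
        by (simp add: n_def)
      moreover have "b = Suc a" if "a = 0" "b = n - 1"
      proof -
        have "{ps ! 0, ps ! (n - 1)} \<in> E" using e xy that by simp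
        then have "n < 3" using False by simp
        then show ?thesis using ab that by linarith
      qed
      ultimately have "b = Suc a" by blast
      then show "\<exists>i. Suc i < n \<and> {x, y} = {ps ! i, ps ! Suc i}" using ab xy by blast
    next
      assume "\<exists>i. Suc i < n \<and> {x, y} = {ps ! i, ps ! Suc i}"
      then show "{x, y} \<in> E" using adj n_def by auto
    qed
    then have "is_path_seq E C ps" unfolding is_path_seq_def n_def[symmetric] using ne dist C by blast
    then show ?thesis ..
  qed
qed

lemma connected_degree_le_2_path_or_cycle:
  assumes fin: "finite C" and x0: "x0 \<in> C"
    and closed: "\<And>x y. x \<in> C \<Longrightarrow> {x, y} \<in> E \<Longrightarrow> y \<in> C"
    and conn: "\<And>y. y \<in> C \<Longrightarrow> (x0, y) \<in> {(x, y). {x, y} \<in> E}\<^sup>*"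
    and fin_nb: "\<And>x. finite {y. {x, y} \<in> E}" and deg: "\<And>x. card {y. {x, y} \<in> E} \<le> 2"
    and noloop: "\<And>x. {x} \<notin> E"
  shows "\<exists>ps. is_path_seq E C ps \<or> is_cycle_seq E C ps"
proof -
  obtain ps where ps: "path_in E C ps" and longest: "\<And>qs. path_in E C qs \<Longrightarrow> length qs \<le> length ps"
    using exists_longest_path_in[OF fin x0] by blast
  have hd_nb: "z \<in> set ps" if "{hd ps, z} \<in> E" for z
    using longest_path_in_end_neighbours(1)[OF closed ps longest that] .
  have last_nb: "z \<in> set ps" if "{last ps, z} \<in> E" for z
    using longest_path_in_end_neighbours(2)[OF closed ps longest that] .
  note saturated = degree_le_2_path_in_saturated[OF ps fin_nb deg hd_nb last_nb]
  have "C \<subseteq> set ps"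
  proof
    fix y assume "y \<in> C"
    have sym_adj: "sym {(x, y). {x, y} \<in> E}" by (auto simp: sym_def insert_commute)
    have "hd ps \<in> C" using ps by (auto simp: path_in_def)
    then have "(hd ps, x0) \<in> {(x, y). {x, y} \<in> E}\<^sup>*"
      using conn sym_rtrancl[OF sym_adj] by (auto simp: sym_def)
    then have "(hd ps, y) \<in> {(x, y). {x, y} \<in> E}\<^sup>*" using conn[OF \<open>y \<in> C\<close>] by simp
    moreover have "hd ps \<in> set ps" using ps by (simp add: path_in_def)
    ultimately show "y \<in> set ps"
      by (induction rule: rtrancl_induct) (auto intro: saturated(1))
  qed
  then have "set ps = C" using ps by (auto simp: path_in_def)
  moreover have "ps \<noteq> []" "distinct ps" "\<And>i. Suc i < length ps \<Longrightarrow> {ps ! i, ps ! Suc i} \<in> E"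
    using ps by (auto simp: path_in_def)
  ultimately show ?thesis using path_or_cycle_by_chords saturated(2) noloop by metis
qed

lemma is_path_seq_rev:
  assumes "is_path_seq E C ps"
  shows "is_path_seq E C (rev ps)"
proof -
  define n where "n = length ps"
  have consecutive_rev: "(\<exists>i. Suc i < n \<and> {x, y} = {ps ! i, ps ! Suc i}) \<longleftrightarrow>
      (\<exists>i. Suc i < n \<and> {x, y} = {rev ps ! i, rev ps ! Suc i})" for x y
  proof -
    have flip: "rev ps ! (n - 2 - i) = ps ! Suc i" "rev ps ! Suc (n - 2 - i) = ps ! i"
      "Suc (n - 2 - i) < n" if "Suc i < n" for i
      using that by (auto simp: rev_nth n_def Suc_diff_Suc numeral_2_eq_2)
    show ?thesis
    proof
      assume "\<exists>i. Suc i < n \<and> {x, y} = {ps ! i, ps ! Suc i}"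
      then obtain i where "Suc i < n" "{x, y} = {ps ! i, ps ! Suc i}" by blast
      then show "\<exists>i. Suc i < n \<and> {x, y} = {rev ps ! i, rev ps ! Suc i}"
        using flip by (intro exI[of _ "n - 2 - i"]) (auto simp: insert_commute)
    next
      assume "\<exists>i. Suc i < n \<and> {x, y} = {rev ps ! i, rev ps ! Suc i}"
      then obtain i where i: "Suc i < n" "{x, y} = {rev ps ! i, rev ps ! Suc i}" by blast
      have "rev ps ! i = ps ! Suc (n - 2 - i)" "rev ps ! Suc i = ps ! (n - 2 - i)"
        using i(1) by (auto simp: rev_nth n_def Suc_diff_Suc numeral_2_eq_2)
      then show "\<exists>i. Suc i < n \<and> {x, y} = {ps ! i, ps ! Suc i}"
        using i by (intro exI[of _ "n - 2 - i"]) (auto simp: insert_commute)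
    qed
  qed
  show ?thesis using assms consecutive_rev unfolding is_path_seq_def n_def by simp
qed

lemma is_cycle_seq_rotate1:
  assumes "is_cycle_seq E C ps"
  shows "is_cycle_seq E C (rotate1 ps)"
proof -
  define n where "n = length ps"
  have n: "0 < n" using assms by (auto simp: is_cycle_seq_def n_def)
  have rot: "rotate1 ps ! i = ps ! (Suc i mod n)" if "i < n" for i
    using that by (simp add: nth_rotate1 n_def)
  have "(\<exists>i<n. {x, y} = {ps ! i, ps ! (Suc i mod n)}) \<longleftrightarrow>
      (\<exists>i<n. {x, y} = {rotate1 ps ! i, rotate1 ps ! (Suc i mod n)})" for x y
  proof
    assume "\<exists>i<n. {x, y} = {ps ! i, ps ! (Suc i mod n)}"
    then obtain i where i: "i < n" "{x, y} = {ps ! i, ps ! (Suc i mod n)}" by blast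
    define i' where "i' = (i + n - 1) mod n"
    have "Suc i' mod n = i" using i(1) n by (cases i) (simp_all add: i'_def mod_Suc_eq)
    then show "\<exists>i<n. {x, y} = {rotate1 ps ! i, rotate1 ps ! (Suc i mod n)}"
      using i n rot by (intro exI[of _ i']) (simp add: i'_def)
  next
    assume "\<exists>i<n. {x, y} = {rotate1 ps ! i, rotate1 ps ! (Suc i mod n)}"
    then obtain i where i: "i < n" "{x, y} = {rotate1 ps ! i, rotate1 ps ! (Suc i mod n)}" by blast
    then show "\<exists>i<n. {x, y} = {ps ! i, ps ! (Suc i mod n)}"
      using rot[OF i(1)] rot[of "Suc i mod n"] n by (intro exI[of _ "Suc i mod n"]) simp
  qed
  then show ?thesis using assms unfolding is_cycle_seq_def n_def by simp
qed

section \<open>Counting choices along zigzags\<close>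

lemma antimono_bool_threshold:
  assumes "\<And>j. j < m \<Longrightarrow> b (Suc j) \<Longrightarrow> b j"
  shows "\<exists>a\<le>Suc m. \<forall>j\<le>m. b j \<longleftrightarrow> j < a"
  using assms
proof (induction m)
  case 0
  show ?case by (cases "b 0") (rule exI[of _ "if b 0 then 1 else 0"]; auto)+
next
  case (Suc m)
  then obtain a where a: "a \<le> Suc m" "\<forall>j\<le>m. b j \<longleftrightarrow> j < a" by auto
  show ?case
  proof (cases "b (Suc m)")
    case True
    then have "a = Suc m" using a Suc.prems[of m] by auto
    then show ?thesis using a True by (intro exI[of _ "Suc (Suc m)"]) (auto simp: le_Suc_eq)
  next
    case False
    then show ?thesis using a by (intro exI[of _ a]) (auto simp: le_Suc_eq)
  qed
qed

lemma cyclic_propagation: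
  assumes step: "\<And>j. j < k \<Longrightarrow> Q j \<Longrightarrow> Q (Suc j mod k)"
    and "j0 < k" "Q j0" "j < k"
  shows "Q j"
proof -
  have "Q ((j0 + t) mod k)" for t
  proof (induction t)
    case (Suc t)
    then show ?case using step[of "(j0 + t) mod k"] \<open>j0 < k\<close> by (simp add: mod_Suc_eq)
  qed (use assms in simp)
  from this[of "j + k - j0"] show ?thesis using assms(2,4) by simp
qed

lemma card_2_ordered:
  assumes "card S = 2" and "A \<Longrightarrow> a \<in> S" and "B \<Longrightarrow> b \<in> S" and "A \<Longrightarrow> B \<Longrightarrow> a \<noteq> b"
  shows "\<exists>p q. S = {p, q} \<and> p \<noteq> q \<and> (A \<longrightarrow> p = a) \<and> (B \<longrightarrow> q = b)"
proof -
  obtain x y where xy: "S = {x, y}" "x \<noteq> y" using assms(1) by (auto simp: card_2_iff)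
  show ?thesis
  proof (cases A)
    case True
    then obtain c where "S = {a, c}" "a \<noteq> c" using xy assms(2) by auto
    then show ?thesis using True assms(3,4) by (intro exI[of _ a] exI[of _ c]) auto
  next
    case False
    show ?thesis
    proof (cases B)
      case True
      then obtain c where "S = {c, b}" "c \<noteq> b" using xy assms(3) by auto
      then show ?thesis using False True by (intro exI[of _ c] exI[of _ b]) auto
    qed (use xy False in auto)
  qed
qed

lemma card_threshold_choices:
  fixes rr :: "nat \<Rightarrow> 'a" and p q :: "nat \<Rightarrow> 'b" and P :: "'a \<Rightarrow> 'b set"
  assumes inj: "inj_on rr {..m}"
    and options: "\<And>j. j \<le> m \<Longrightarrow> P (rr j) = {p j, q j}" "\<And>j. j \<le> m \<Longrightarrow> p j \<noteq> q j"
    and link: "\<And>j. j < m \<Longrightarrow> p (Suc j) = q j"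
  shows "card {g \<in> Pi\<^sub>E (rr ` {..m}) P. \<forall>j<m. g (rr j) = q j \<or> g (rr (Suc j)) = q j} = m + 2"
proof -
  let ?R = "rr ` {..m}"
  let ?S = "{g \<in> Pi\<^sub>E ?R P. \<forall>j<m. g (rr j) = q j \<or> g (rr (Suc j)) = q j}"
  define G where "G a = (\<lambda>r\<in>?R. if the_inv_into {..m} rr r < a
                                 then q (the_inv_into {..m} rr r) else p (the_inv_into {..m} rr r))" for a
  have G_rr: "G a (rr j) = (if j < a then q j else p j)" if "j \<le> m" for a j
    using that the_inv_into_f_f[OF inj] unfolding G_def by simp
  have G_in: "G a \<in> ?S" for a
  proof -
    have "G a \<in> Pi\<^sub>E ?R P" using G_rr options(1) unfolding G_def by force
    moreover have "G a (rr j) = q j \<or> G a (rr (Suc j)) = q j" if "j < m" for j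
      using G_rr[of j a] G_rr[of "Suc j" a] link[OF that] that by auto
    ultimately show ?thesis by blast
  qed
  have "g \<in> G ` {..Suc m}" if g: "g \<in> ?S" for g
  proof -
    have g_rr: "g (rr j) \<in> {p j, q j}" if "j \<le> m" for j using g options(1)[OF that] that by auto
    have "\<exists>a\<le>Suc m. \<forall>j\<le>m. g (rr j) = q j \<longleftrightarrow> j < a"
    proof (rule antimono_bool_threshold)
      fix j assume j: "j < m" and "g (rr (Suc j)) = q (Suc j)"
      then have "g (rr (Suc j)) \<noteq> q j" using options(2)[of "Suc j"] link[OF j] by auto
      then show "g (rr j) = q j" using g j by auto
    qed
    then obtain a where a: "a \<le> Suc m" "\<forall>j\<le>m. g (rr j) = q j \<longleftrightarrow> j < a" by blast
    have "g = G a"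
    proof
      fix r show "g r = G a r"
      proof (cases "r \<in> ?R")
        case True
        then obtain j where j: "j \<le> m" "r = rr j" by auto
        have "g (rr j) = (if j < a then q j else p j)"
        proof (cases "j < a")
          case False
          then have "g (rr j) \<noteq> q j" using a(2) j(1) by blast
          then show ?thesis using g_rr[OF j(1)] False by simp
        qed (use a(2) j(1) in simp)
        then show ?thesis using G_rr[of j a] j by simp
      next
        case False
        have "g \<in> Pi\<^sub>E ?R P" using g by blast
        then have "g r = undefined" using False by (rule PiE_arb)
        then show ?thesis using False by (simp add: G_def)
      qed
    qed
    then show ?thesis using a(1) by simp
  qed
  then have "?S = G ` {..Suc m}" using G_in by blast
  moreover have "inj_on G {..Suc m}"
  proof (rule inj_onI)
    fix a a' assume "a \<in> {..Suc m}" "a' \<in> {..Suc m}" "G a = G a'"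
    show "a = a'"
    proof (rule ccontr)
      assume "a \<noteq> a'"
      then have j: "min a a' \<le> m" using \<open>a \<in> {..Suc m}\<close> \<open>a' \<in> {..Suc m}\<close> by auto
      have "G a (rr (min a a')) \<noteq> G a' (rr (min a a'))"
        using G_rr[OF j, of a] G_rr[OF j, of a'] options(2)[OF j] \<open>a \<noteq> a'\<close> by (auto simp: min_def)
      then show False using \<open>G a = G a'\<close> by simp
    qed
  qed
  ultimately show ?thesis by (simp add: card_image)
qed

text \<open>Reticulations \<open>rr 0, \<dots>, rr m\<close> alternate with omnians \<open>om 0, \<dots>, om (m - 1)\<close>; each
  \<open>om j\<close> must be chosen by one of its two neighbours \<open>rr j\<close> and \<open>rr (Suc j)\<close>.\<close>
lemma card_zigzag_choices:
  fixes rr :: "nat \<Rightarrow> 'a" and om :: "nat \<Rightarrow> 'b" and P :: "'a \<Rightarrow> 'b set"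
  assumes inj: "inj_on rr {..m}"
    and two: "\<And>j. j \<le> m \<Longrightarrow> card (P (rr j)) = 2"
    and right: "\<And>j. j < m \<Longrightarrow> om j \<in> P (rr j)"
    and left: "\<And>j. j < m \<Longrightarrow> om j \<in> P (rr (Suc j))"
    and distinct: "\<And>j. Suc j < m \<Longrightarrow> om j \<noteq> om (Suc j)"
  shows "card {g \<in> Pi\<^sub>E (rr ` {..m}) P. \<forall>j<m. g (rr j) = om j \<or> g (rr (Suc j)) = om j} = m + 2"
proof -
  have "\<exists>p q. P (rr j) = {p, q} \<and> p \<noteq> q \<and> (0 < j \<longrightarrow> p = om (j - 1)) \<and> (j < m \<longrightarrow> q = om j)"
    if "j \<le> m" for j
    by (rule card_2_ordered[OF two[OF that]])
      (use left[of "j - 1"] right[of j] distinct[of "j - 1"] that in auto)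
  then obtain p q where pq: "\<And>j. j \<le> m \<Longrightarrow> P (rr j) = {p j, q j}" "\<And>j. j \<le> m \<Longrightarrow> p j \<noteq> q j"
    and p_om: "\<And>j. 0 < j \<Longrightarrow> j \<le> m \<Longrightarrow> p j = om (j - 1)"
    and q_om: "\<And>j. j < m \<Longrightarrow> q j = om j"
    by (metis less_imp_le_nat)
  have link: "p (Suc j) = q j" if "j < m" for j using p_om[of "Suc j"] q_om[OF that] that by simp
  have "card {g \<in> Pi\<^sub>E (rr ` {..m}) P. \<forall>j<m. g (rr j) = om j \<or> g (rr (Suc j)) = om j} =
        card {g \<in> Pi\<^sub>E (rr ` {..m}) P. \<forall>j<m. g (rr j) = q j \<or> g (rr (Suc j)) = q j}"
    using q_om by simp
  also have "\<dots> = m + 2" using card_threshold_choices[where p = p and q = q, OF inj pq link] .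
  finally show ?thesis .
qed

lemma forced_chain_choice_unique:
  fixes k :: nat and rr :: "nat \<Rightarrow> 'a" and om :: "nat \<Rightarrow> 'b" and P :: "'a \<Rightarrow> 'b set"
  defines "S \<equiv> {g \<in> Pi\<^sub>E (rr ` {..<k}) P. (0 < k \<longrightarrow> g (rr 0) = om 0) \<and>
           (\<forall>j. Suc j < k \<longrightarrow> g (rr j) = om (Suc j) \<or> g (rr (Suc j)) = om (Suc j))}"
  assumes distinct: "\<And>j. Suc j < k \<Longrightarrow> om j \<noteq> om (Suc j)"
    and "g \<in> S" "g' \<in> S"
  shows "g = g'"
proof -
  have forced: "h (rr j) = om j" if "h \<in> S" "j < k" for h j
    using \<open>j < k\<close>
  proof (induction j)
    case (Suc j)
    then have "h (rr j) \<noteq> om (Suc j)" using distinct by simp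
    moreover have "h (rr j) = om (Suc j) \<or> h (rr (Suc j)) = om (Suc j)"
      using \<open>h \<in> S\<close> Suc.prems unfolding S_def by blast
    ultimately show ?case by simp
  qed (use \<open>h \<in> S\<close> in \<open>simp add: S_def\<close>)
  have "g \<in> Pi\<^sub>E (rr ` {..<k}) P" "g' \<in> Pi\<^sub>E (rr ` {..<k}) P" using assms(3,4) unfolding S_def by blast+
  then show ?thesis
  proof (rule PiE_ext)
    fix r assume "r \<in> rr ` {..<k}"
    then obtain j where "j < k" "r = rr j" by blast
    then show "g r = g' r" using forced[OF assms(3)] forced[OF assms(4)] by simp
  qed
qed

lemma cyclic_choice_orientation:
  assumes distinct: "\<And>j. j < k \<Longrightarrow> om j \<noteq> om (Suc j mod k)"
    and cover: "\<And>j. j < k \<Longrightarrow> g (rr j) = om j \<or> g (rr (Suc j mod k)) = om j"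
  shows "(\<forall>j<k. g (rr j) = om j) \<or> (\<forall>j<k. g (rr (Suc j mod k)) = om j)"
proof (cases "\<forall>j<k. g (rr j) = om j")
  case False
  then obtain j0 where j0: "j0 < k" "g (rr j0) \<noteq> om j0" by blast
  have "g (rr j) \<noteq> om j" if "j < k" for j
  proof (rule cyclic_propagation[where Q = "\<lambda>j. g (rr j) \<noteq> om j", OF _ j0 that])
    fix i assume "i < k" "g (rr i) \<noteq> om i"
    then have "g (rr (Suc i mod k)) = om i" using cover by blast
    then show "g (rr (Suc i mod k)) \<noteq> om (Suc i mod k)" using distinct[OF \<open>i < k\<close>] by simp
  qed
  then show ?thesis using cover by blast
qed simp

lemma card_cyclic_zigzag_choices:
  fixes rr :: "nat \<Rightarrow> 'a" and om :: "nat \<Rightarrow> 'b" and P :: "'a \<Rightarrow> 'b set"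
  assumes k: "0 < k" and inj: "inj_on rr {..<k}"
    and two: "\<And>j. j < k \<Longrightarrow> card (P (rr j)) = 2"
    and right: "\<And>j. j < k \<Longrightarrow> om j \<in> P (rr j)"
    and left: "\<And>j. j < k \<Longrightarrow> om j \<in> P (rr (Suc j mod k))"
    and distinct: "\<And>j. j < k \<Longrightarrow> om j \<noteq> om (Suc j mod k)"
  shows "card {g \<in> Pi\<^sub>E (rr ` {..<k}) P. \<forall>j<k. g (rr j) = om j \<or> g (rr (Suc j mod k)) = om j} = 2"
proof -
  let ?R = "rr ` {..<k}"
  let ?S = "{g \<in> Pi\<^sub>E ?R P. \<forall>j<k. g (rr j) = om j \<or> g (rr (Suc j mod k)) = om j}"
  define pv where "pv j = (j + k - 1) mod k" for j
  have pv_lt: "pv j < k" for j using k by (simp add: pv_def)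
  have Suc_pv: "Suc (pv j) mod k = j" if "j < k" for j
    using that k by (cases j) (simp_all add: pv_def mod_Suc_eq)
  have pv_Suc: "pv (Suc j mod k) = j" if "j < k" for j
  proof (cases "Suc j < k")
    case False
    then have "Suc j = k" using that by simp
    then show ?thesis by (simp add: pv_def)
  qed (simp add: pv_def)
  have parents: "P (rr j) = {om (pv j), om j}" "om (pv j) \<noteq> om j" if "j < k" for j
    using card_2_ordered[OF two[OF that], of True "om (pv j)" True "om j"]
      left[OF pv_lt, of j] right[OF that] distinct[OF pv_lt, of j] Suc_pv[OF that] by auto
  define idx where "idx = the_inv_into {..<k} rr"
  have idx_rr: "idx (rr j) = j" if "j < k" for j
    using the_inv_into_f_f[OF inj] that unfolding idx_def by simp
  define g1 where "g1 = (\<lambda>r\<in>?R. om (idx r))"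
  define g2 where "g2 = (\<lambda>r\<in>?R. om (pv (idx r)))"
  have g1_in: "g1 \<in> ?S" using parents idx_rr unfolding g1_def by auto
  have g2_in: "g2 \<in> ?S"
  proof -
    have "g2 (rr (Suc j mod k)) = om j" if "j < k" for j
      using idx_rr[of "Suc j mod k"] pv_Suc[OF that] k unfolding g2_def by simp
    then show ?thesis using parents idx_rr unfolding g2_def by auto
  qed
  have "g1 (rr 0) \<noteq> g2 (rr 0)" using parents(2)[OF k] idx_rr[OF k] k unfolding g1_def g2_def by auto
  then have "g1 \<noteq> g2" by metis
  have S_cases: "g = g1 \<or> g = g2" if g: "g \<in> ?S" for g
  proof -
    have "g \<in> Pi\<^sub>E ?R P" "g1 \<in> Pi\<^sub>E ?R P" "g2 \<in> Pi\<^sub>E ?R P" using g g1_in g2_in by blast+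
    moreover have "(\<forall>j<k. g (rr j) = om j) \<or> (\<forall>j<k. g (rr (Suc j mod k)) = om j)"
      using cyclic_choice_orientation[where k = k and om = om, OF distinct] g by blast
    ultimately show ?thesis
    proof (elim disjE)
      assume forward: "\<forall>j<k. g (rr j) = om j"
      show "g = g1 \<or> g = g2"
      proof (rule disjI1, rule PiE_ext[of g ?R P])
        fix r assume "r \<in> ?R"
        then obtain j where "j < k" "r = rr j" by blast
        then show "g r = g1 r" using forward idx_rr unfolding g1_def by simp
      qed (use g g1_in in blast)+
    next
      assume backward: "\<forall>j<k. g (rr (Suc j mod k)) = om j"
      show "g = g1 \<or> g = g2"
      proof (rule disjI2, rule PiE_ext[of g ?R P])
        fix r assume "r \<in> ?R"
        then obtain j where "j < k" "r = rr j" by blast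
        then show "g r = g2 r" using backward[rule_format, OF pv_lt[of j]] Suc_pv idx_rr unfolding g2_def by simp
      qed (use g g2_in in blast)+
    qed
  qed
  have "?S = {g1, g2}"
  proof (intro equalityI subsetI)
    fix g assume "g \<in> ?S"
    from S_cases[OF this] show "g \<in> {g1, g2}" by blast
  next
    fix g assume "g \<in> {g1, g2}"
    then show "g \<in> ?S" by (elim insertE emptyE) (simp_all only: g1_in g2_in)
  qed
  then show ?thesis using \<open>g1 \<noteq> g2\<close> by simp
qed

section \<open>Binary phylogenetic networks\<close>

locale binary_phylo_network =
  fixes V :: "'a set" and A :: "('a \<times> 'a) set" and rho :: 'a and X :: "'a set"
  assumes binary: "binary_network V A rho X"
begin

abbreviation "Ret \<equiv> reticulations V A rho X"
abbreviation "Om \<equiv> omnians V A rho X"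
abbreviation "parents v \<equiv> {u. (u, v) \<in> A}"
abbreviation "children v \<equiv> {w. (v, w) \<in> A}"

lemma phylo_network: "phylo_network V A rho X"
  using binary unfolding binary_network_def by simp

lemma finite_V: "finite V" and arcs_in_V: "A \<subseteq> V \<times> V" and acyclic_A: "acyclic A"
  and indeg_root: "indeg A rho = 0" and root_reaches: "\<And>v. v \<in> V \<Longrightarrow> v \<noteq> rho \<Longrightarrow> (rho, v) \<in> A\<^sup>+"
  and outdeg_root: "outdeg A rho \<ge> 1" and leaves_eq: "X = {v \<in> V. outdeg A v = 0}"
  and indeg_leaf: "\<And>x. x \<in> X \<Longrightarrow> indeg A x = 1"
  and vertex_kinds: "\<And>v. v \<in> V - X - {rho} \<Longrightarrow>
         (indeg A v = 1 \<and> outdeg A v \<ge> 2) \<or> (indeg A v \<ge> 2 \<and> outdeg A v = 1)"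
  using phylo_network unfolding phylo_network_def by auto

lemma finite_A: "finite A"
  using finite_V arcs_in_V finite_subset by blast

lemma finite_parents: "finite (parents v)"
proof -
  have "parents v \<subseteq> fst ` A" by force
  then show ?thesis using finite_A finite_subset by blast
qed

lemma finite_children: "finite (children v)"
proof -
  have "children v \<subseteq> snd ` A" by force
  then show ?thesis using finite_A finite_subset by blast
qed

lemma parents_root: "parents rho = {}"
  using indeg_root finite_parents unfolding indeg_def by auto

lemma reticulation_in_V: "r \<in> Ret \<Longrightarrow> r \<in> V"
  and reticulation_not_root: "r \<in> Ret \<Longrightarrow> r \<noteq> rho"
  by (auto simp: reticulations_def)

lemma card_parents_reticulation: "r \<in> Ret \<Longrightarrow> card (parents r) = 2"
  using binary unfolding binary_network_def indeg_def by auto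

lemma card_parents_non_reticulation:
  assumes "v \<in> V" "v \<noteq> rho" "v \<notin> Ret"
  shows "card (parents v) = 1"
proof (cases "v \<in> X")
  case True then show ?thesis using indeg_leaf unfolding indeg_def by auto
next
  case False
  then show ?thesis using vertex_kinds[of v] assms unfolding reticulations_def indeg_def by auto
qed

lemma omnian_in_V: "o' \<in> Om \<Longrightarrow> o' \<in> V" and omnian_not_leaf: "o' \<in> Om \<Longrightarrow> o' \<notin> X"
  by (auto simp: omnians_def)

text \<open>A minimal non-root vertex has the root as its only parent, so it is a non-reticulate
  child of the root.\<close>
lemma root_not_omnian: "rho \<notin> Om"
proof
  assume "rho \<in> Om"
  obtain w where w: "(rho, w) \<in> A"
    using outdeg_root unfolding outdeg_def by (metis Collect_empty_eq card.empty not_one_le_zero)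
  have "w \<noteq> rho" using w acyclic_A by (auto simp: acyclic_def)
  then have "w \<in> V - {rho}" using w arcs_in_V by auto
  then obtain v where v: "v \<in> V - {rho}" and minimal: "\<And>y. (y, v) \<in> A \<Longrightarrow> y \<notin> V - {rho}"
    using wfE_min[OF finite_acyclic_wf[OF finite_A acyclic_A]] by metis
  have "(rho, v) \<in> A\<^sup>+" using root_reaches v by auto
  then obtain u where u: "(u, v) \<in> A" by (metis tranclD2)
  then have "u = rho" using minimal arcs_in_V by auto
  then have "parents v = {rho}" using u minimal arcs_in_V by auto
  then have "v \<notin> Ret" using card_parents_reticulation[of v] by auto
  with \<open>parents v = {rho}\<close> \<open>rho \<in> Om\<close> show False by (auto simp: omnians_def)
qed

lemma card_children_omnian: "o' \<in> Om \<Longrightarrow> card (children o') \<le> 2"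
proof -
  assume o: "o' \<in> Om"
  then have o': "o' \<in> V - X - {rho}" using omnian_in_V omnian_not_leaf root_not_omnian by auto
  show ?thesis
  proof (cases "o' \<in> Ret")
    case True then show ?thesis unfolding reticulations_def outdeg_def by auto
  next
    case False
    then have "o' \<in> tree_vertices V A rho X"
      using vertex_kinds[OF o'] o' unfolding reticulations_def tree_vertices_def by auto
    then show ?thesis using binary unfolding binary_network_def outdeg_def by auto
  qed
qed

section \<open>Support trees as parent choices\<close>

text \<open>\<open>f r\<close> is the parent whose arc into \<open>r\<close> the tree keeps.\<close>
definition parent_choices :: "('a \<Rightarrow> 'a) set" where
  "parent_choices = {f \<in> Pi\<^sub>E Ret (\<lambda>r. parents r). Om \<subseteq> f ` Ret}"

definition choice_tree :: "('a \<Rightarrow> 'a) \<Rightarrow> ('a \<times> 'a) set" where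
  "choice_tree f = {(u, v) \<in> A. v \<in> Ret \<longrightarrow> u = f v}"

definition tree_choice :: "('a \<times> 'a) set \<Rightarrow> 'a \<Rightarrow> 'a" where
  "tree_choice T = (\<lambda>r\<in>Ret. THE u. (u, r) \<in> T)"

lemma finite_parent_choices: "finite parent_choices"
proof -
  have "Ret \<subseteq> V" using reticulation_in_V by blast
  then have "finite Ret" using finite_V by (rule finite_subset)
  then have "finite (Pi\<^sub>E Ret (\<lambda>r. parents r))" using finite_parents by (intro finite_PiE) auto
  then show ?thesis unfolding parent_choices_def by simp
qed

lemma parents_choice_tree:
  assumes "f \<in> parent_choices" and "v \<in> V" "v \<noteq> rho"
  shows "{u. (u, v) \<in> choice_tree f} = (if v \<in> Ret then {f v} else parents v)"
proof (cases "v \<in> Ret")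
  case True
  then have "f v \<in> parents v" using assms(1) unfolding parent_choices_def by auto
  then show ?thesis using True unfolding choice_tree_def by auto
qed (auto simp: choice_tree_def)

lemma indeg_choice_tree:
  "f \<in> parent_choices \<Longrightarrow> v \<in> V \<Longrightarrow> v \<noteq> rho \<Longrightarrow> indeg (choice_tree f) v = 1"
  using parents_choice_tree card_parents_non_reticulation unfolding indeg_def by auto

lemma choice_tree_reaches:
  assumes f: "f \<in> parent_choices"
  shows "v \<in> V \<Longrightarrow> v \<noteq> rho \<Longrightarrow> (rho, v) \<in> (choice_tree f)\<^sup>+"
proof (induction v rule: wf_induct_rule[OF finite_acyclic_wf[OF finite_A acyclic_A]])
  case (1 v)
  have "card {u. (u, v) \<in> choice_tree f} = 1"
    using indeg_choice_tree[OF f "1.prems"] unfolding indeg_def .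
  then obtain u where "{u'. (u', v) \<in> choice_tree f} = {u}" by (auto simp: card_1_singleton_iff)
  then have u: "(u, v) \<in> choice_tree f" by auto
  then have uv: "(u, v) \<in> A" "u \<in> V" using arcs_in_V by (auto simp: choice_tree_def)
  show ?case
  proof (cases "u = rho")
    case False
    then have "(rho, u) \<in> (choice_tree f)\<^sup>+" using "1.IH" uv by blast
    then show ?thesis using u by simp
  qed (use u in simp)
qed

lemma choice_tree_has_child:
  assumes f: "f \<in> parent_choices" and v: "v \<in> V" "v \<notin> X"
  shows "\<exists>w. (v, w) \<in> choice_tree f"
proof (cases "v \<in> Om")
  case True
  then obtain r where "r \<in> Ret" "v = f r" using f unfolding parent_choices_def by auto
  moreover then have "(v, r) \<in> A" using f unfolding parent_choices_def by auto
  ultimately show ?thesis unfolding choice_tree_def by auto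
next
  case False
  then obtain w where "(v, w) \<in> A" "w \<notin> Ret" using v unfolding omnians_def by auto
  then show ?thesis unfolding choice_tree_def by auto
qed

lemma support_tree_choice_tree:
  assumes f: "f \<in> parent_choices"
  shows "support_tree V A rho X (choice_tree f)"
proof -
  have sub: "choice_tree f \<subseteq> A" unfolding choice_tree_def by auto
  have "{u. (u, rho) \<in> choice_tree f} = {}" using parents_root sub by auto
  then have "indeg (choice_tree f) rho = 0" unfolding indeg_def by simp
  moreover have "{v \<in> V. outdeg (choice_tree f) v = 0} = X"
  proof (intro set_eqI iffI)
    fix v assume "v \<in> {v \<in> V. outdeg (choice_tree f) v = 0}"
    moreover have "finite {w. (v, w) \<in> choice_tree f}"
      by (rule finite_subset[OF _ finite_children[of v]]) (use sub in auto)
    ultimately show "v \<in> X" using choice_tree_has_child[OF f] unfolding outdeg_def by fastforce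
  next
    fix v assume "v \<in> X"
    then have "v \<in> V" "children v = {}" using leaves_eq finite_children unfolding outdeg_def by auto
    moreover have "{w. (v, w) \<in> choice_tree f} = {}" using \<open>children v = {}\<close> sub by auto
    ultimately show "v \<in> {v \<in> V. outdeg (choice_tree f) v = 0}" unfolding outdeg_def by simp
  qed
  ultimately show ?thesis
    unfolding support_tree_def using sub indeg_choice_tree[OF f] choice_tree_reaches[OF f] by auto
qed

lemma tree_choice_parent:
  assumes T: "support_tree V A rho X T" and r: "r \<in> Ret"
  shows "(u, r) \<in> T \<longleftrightarrow> u = tree_choice T r"
proof -
  have "card {u. (u, r) \<in> T} = 1"
    using T reticulation_in_V[OF r] reticulation_not_root[OF r] unfolding support_tree_def indeg_def by auto
  then obtain u' where u': "{u. (u, r) \<in> T} = {u'}" by (auto simp: card_1_singleton_iff)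
  then have "tree_choice T r = u'" using r unfolding tree_choice_def by auto
  then show ?thesis using u' by auto
qed

lemma tree_choice_in_parent_choices:
  assumes T: "support_tree V A rho X T"
  shows "tree_choice T \<in> parent_choices"
proof -
  have sub: "T \<subseteq> A" using T unfolding support_tree_def by auto
  have "tree_choice T r \<in> parents r" if "r \<in> Ret" for r
    using tree_choice_parent[OF T that] sub by auto
  moreover have "o' \<in> tree_choice T ` Ret" if o: "o' \<in> Om" for o'
  proof -
    have "o' \<in> V" "o' \<notin> X" using omnian_in_V[OF o] omnian_not_leaf[OF o] by auto
    then have "outdeg T o' \<noteq> 0" using T unfolding support_tree_def by auto
    then obtain w where w: "(o', w) \<in> T" unfolding outdeg_def by (metis Collect_empty_eq card.empty)
    then have "w \<in> Ret" using o sub unfolding omnians_def by auto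
    then show ?thesis using tree_choice_parent[OF T] w by auto
  qed
  ultimately show ?thesis unfolding parent_choices_def tree_choice_def by auto
qed

lemma choice_tree_tree_choice:
  assumes T: "support_tree V A rho X T"
  shows "choice_tree (tree_choice T) = T"
proof (intro set_eqI iffI)
  have sub: "T \<subseteq> A" using T unfolding support_tree_def by auto
  fix e assume "e \<in> choice_tree (tree_choice T)"
  then obtain u v where e: "e = (u, v)" "(u, v) \<in> A" and ret: "v \<in> Ret \<longrightarrow> u = tree_choice T v"
    unfolding choice_tree_def by auto
  show "e \<in> T"
  proof (cases "v \<in> Ret")
    case True then show ?thesis using e ret tree_choice_parent[OF T] by auto
  next
    case False
    have v: "v \<in> V" "v \<noteq> rho" using e arcs_in_V parents_root by auto
    then have "card {u. (u, v) \<in> T} = 1" using T unfolding support_tree_def indeg_def by auto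
    then obtain u' where "{u. (u, v) \<in> T} = {u'}" by (auto simp: card_1_singleton_iff)
    then have u': "(u', v) \<in> T" by auto
    obtain p where "parents v = {p}"
      using card_parents_non_reticulation[OF v False] by (auto simp: card_1_singleton_iff)
    moreover have "u' \<in> parents v" using u' sub by auto
    ultimately have "u' = u" using e(2) by auto
    then show ?thesis using u' e by simp
  qed
next
  fix e assume "e \<in> T"
  moreover obtain u v where "e = (u, v)" by fastforce
  ultimately show "e \<in> choice_tree (tree_choice T)"
    using T tree_choice_parent[OF T] unfolding choice_tree_def support_tree_def by auto
qed

lemma tree_choice_choice_tree:
  assumes f: "f \<in> parent_choices"
  shows "tree_choice (choice_tree f) = f"
proof
  fix r
  show "tree_choice (choice_tree f) r = f r"
  proof (cases "r \<in> Ret")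
    case True
    then show ?thesis
      using tree_choice_parent[OF support_tree_choice_tree[OF f] True, of "f r"]
        parents_choice_tree[OF f reticulation_in_V reticulation_not_root] by auto
  next
    case False
    then show ?thesis using f unfolding tree_choice_def parent_choices_def by (auto simp: PiE_def extensional_def)
  qed
qed

lemma card_Sup_eq_card_parent_choices: "card (Sup V A rho X) = card parent_choices"
proof (rule bij_betw_same_card[of tree_choice], rule bij_betw_byWitness[where f' = choice_tree])
  show "\<forall>T\<in>Sup V A rho X. choice_tree (tree_choice T) = T"
    using choice_tree_tree_choice unfolding Sup_def by auto
  show "\<forall>f\<in>parent_choices. tree_choice (choice_tree f) = f"
    using tree_choice_choice_tree by auto
  show "tree_choice ` Sup V A rho X \<subseteq> parent_choices"
    using tree_choice_in_parent_choices unfolding Sup_def by auto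
  show "choice_tree ` parent_choices \<subseteq> Sup V A rho X"
    using support_tree_choice_tree unfolding Sup_def by auto
qed

section \<open>The components of the bipartite graph\<close>

abbreviation "E \<equiv> BN_edges V A rho X"
abbreviation "W \<equiv> BN_vertices V A rho X"
abbreviation "Adj \<equiv> {(x, y). {x, y} \<in> E}"
abbreviation "Comps \<equiv> BN_components V A rho X"

lemma BN_edge_iff: "{Inl o', Inr r} \<in> E \<longleftrightarrow> (o', r) \<in> A \<and> o' \<in> Om \<and> r \<in> Ret"
proof
  assume "{Inl o', Inr r} \<in> E"
  then obtain a b where "{Inl o', Inr r} = {Inl a, Inr b}" "(a, b) \<in> A" "a \<in> Om" "b \<in> Ret"
    unfolding BN_edges_def by blast
  then show "(o', r) \<in> A \<and> o' \<in> Om \<and> r \<in> Ret" by (auto simp: doubleton_eq_iff)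
qed (auto simp: BN_edges_def)

lemma BN_edgeE:
  assumes "e \<in> E"
  obtains o' r where "e = {Inl o', Inr r}" "(o', r) \<in> A" "o' \<in> Om" "r \<in> Ret"
  using assms unfolding BN_edges_def by blast

lemma BN_edge_Inl_Inl: "{Inl a, Inl b} \<notin> E"
  by (auto elim: BN_edgeE simp: doubleton_eq_iff)

lemma BN_edge_Inr_Inr: "{Inr a, Inr b} \<notin> E"
  by (auto elim: BN_edgeE simp: doubleton_eq_iff)

lemma BN_no_loop: "{x} \<notin> E"
  by (metis BN_edgeE doubleton_eq_iff insert_absorb2 sum.distinct(1))

lemma BN_edge_vertices: "{x, y} \<in> E \<Longrightarrow> x \<in> W \<and> y \<in> W"
  by (auto elim!: BN_edgeE simp: doubleton_eq_iff BN_vertices_def)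

lemma BN_neighbours_Inl: "{y. {Inl o', y} \<in> E} = Inr ` {r \<in> children o'. o' \<in> Om \<and> r \<in> Ret}"
proof (intro set_eqI iffI)
  fix y assume "y \<in> {y. {Inl o', y} \<in> E}"
  then show "y \<in> Inr ` {r \<in> children o'. o' \<in> Om \<and> r \<in> Ret}"
    using BN_edge_Inl_Inl BN_edge_iff by (cases y) auto
qed (use BN_edge_iff in auto)

lemma BN_neighbours_Inr: "{y. {Inr r, y} \<in> E} = Inl ` {o' \<in> parents r. o' \<in> Om \<and> r \<in> Ret}"
proof (intro set_eqI iffI)
  fix y assume "y \<in> {y. {Inr r, y} \<in> E}"
  then show "y \<in> Inl ` {o' \<in> parents r. o' \<in> Om \<and> r \<in> Ret}"
    using BN_edge_Inr_Inr BN_edge_iff by (cases y) (auto simp: insert_commute)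
qed (use BN_edge_iff in \<open>auto simp: insert_commute\<close>)

lemma finite_BN_neighbours: "finite {y. {x, y} \<in> E}"
proof (cases x)
  case (Inl o')
  have "finite {r \<in> children o'. o' \<in> Om \<and> r \<in> Ret}" using finite_children by simp
  then show ?thesis using Inl BN_neighbours_Inl by simp
next
  case (Inr r)
  have "finite {o' \<in> parents r. o' \<in> Om \<and> r \<in> Ret}" using finite_parents by simp
  then show ?thesis using Inr BN_neighbours_Inr by simp
qed

lemma card_BN_neighbours: "card {y. {x, y} \<in> E} \<le> 2"
proof (cases x)
  case (Inl o')
  have "card (Inr ` {r \<in> children o'. o' \<in> Om \<and> r \<in> Ret}) \<le> card {r \<in> children o'. o' \<in> Om \<and> r \<in> Ret}"
    using finite_children by (intro card_image_le) simp
  also have "\<dots> \<le> 2"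
  proof (cases "o' \<in> Om")
    case True
    have "card {r \<in> children o'. o' \<in> Om \<and> r \<in> Ret} \<le> card (children o')"
      by (rule card_mono[OF finite_children]) auto
    then show ?thesis using card_children_omnian[OF True] by linarith
  qed simp
  finally show ?thesis using Inl BN_neighbours_Inl by simp
next
  case (Inr r)
  have "card (Inl ` {o' \<in> parents r. o' \<in> Om \<and> r \<in> Ret}) \<le> card {o' \<in> parents r. o' \<in> Om \<and> r \<in> Ret}"
    using finite_parents by (intro card_image_le) simp
  also have "\<dots> \<le> 2"
  proof (cases "r \<in> Ret")
    case True
    have "card {o' \<in> parents r. o' \<in> Om \<and> r \<in> Ret} \<le> card (parents r)"
      by (rule card_mono[OF finite_parents]) auto
    then show ?thesis using card_parents_reticulation[OF True] by linarith
  qed simp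
  finally show ?thesis using Inr BN_neighbours_Inr by simp
qed

lemma sym_Adj: "sym Adj"
  by (auto simp: sym_def insert_commute)

definition component_of :: "'a + 'a \<Rightarrow> ('a + 'a) set" where
  "component_of x = {y \<in> W. (x, y) \<in> Adj\<^sup>*}"

lemma BN_components_eq: "Comps = component_of ` W"
proof -
  have "Comps = W // (Adj\<^sup>* \<inter> W \<times> W)" unfolding BN_components_def BN_adj_def by simp
  then show ?thesis unfolding quotient_def component_of_def by auto
qed

lemma component_of_in_components: "x \<in> W \<Longrightarrow> component_of x \<in> Comps"
  and mem_component_of: "x \<in> W \<Longrightarrow> x \<in> component_of x"
  using BN_components_eq by (auto simp: component_of_def)

lemma component_subset: "C \<in> Comps \<Longrightarrow> C \<subseteq> W"
  using BN_components_eq by (auto simp: component_of_def)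

lemma component_connected:
  assumes "C \<in> Comps" "x \<in> C" "y \<in> C"
  shows "(x, y) \<in> Adj\<^sup>*"
proof -
  obtain c where "C = component_of c" using assms(1) BN_components_eq by auto
  then have "(x, c) \<in> Adj\<^sup>*" "(c, y) \<in> Adj\<^sup>*"
    using assms(2,3) sym_rtrancl[OF sym_Adj] by (auto simp: component_of_def sym_def)
  then show ?thesis by (rule rtrancl_trans)
qed

lemma component_closed:
  assumes "C \<in> Comps" "x \<in> C" "{x, y} \<in> E"
  shows "y \<in> C"
proof -
  obtain c where c: "C = component_of c" using assms(1) BN_components_eq by auto
  then have "(c, y) \<in> Adj\<^sup>*" using assms(2,3) by (auto simp: component_of_def intro: rtrancl_into_rtrancl)
  then show ?thesis using c BN_edge_vertices[OF assms(3)] by (simp add: component_of_def)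
qed

lemma component_of_eq:
  assumes "C \<in> Comps" "x \<in> C"
  shows "component_of x = C"
proof (intro set_eqI iffI)
  fix y assume "y \<in> component_of x"
  then have "(x, y) \<in> Adj\<^sup>*" by (simp add: component_of_def)
  then show "y \<in> C"
  proof (induction rule: rtrancl_induct)
    case (step y z) then show ?case using component_closed[OF assms(1)] by blast
  qed (rule assms(2))
next
  fix y assume "y \<in> C"
  then show "y \<in> component_of x"
    using component_connected[OF assms \<open>y \<in> C\<close>] component_subset[OF assms(1)]
    by (auto simp: component_of_def)
qed

lemma finite_BN_vertices: "finite W"
proof -
  have "Om \<subseteq> V" "Ret \<subseteq> V" using omnian_in_V reticulation_in_V by auto
  then show ?thesis using finite_V finite_subset unfolding BN_vertices_def by blast
qed

lemma finite_components: "finite Comps"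
  using BN_components_eq finite_BN_vertices by simp

lemma BN_component_path_or_cycle:
  assumes C: "C \<in> Comps"
  shows "\<exists>ps. is_path_seq E C ps \<or> is_cycle_seq E C ps"
proof -
  obtain c where c: "c \<in> W" "C = component_of c" using C BN_components_eq by auto
  then have "c \<in> C" using mem_component_of by simp
  show ?thesis
  proof (rule connected_degree_le_2_path_or_cycle)
    show "finite C" using component_subset[OF C] finite_BN_vertices finite_subset by blast
    show "\<And>y. y \<in> C \<Longrightarrow> (c, y) \<in> Adj\<^sup>*" using component_connected[OF C \<open>c \<in> C\<close>] .
  qed (use \<open>c \<in> C\<close> component_closed[OF C] finite_BN_neighbours card_BN_neighbours BN_no_loop in auto)
qed

definition comp_rets :: "('a + 'a) set \<Rightarrow> 'a set" where
  "comp_rets C = Inr -` C"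

definition comp_omnians :: "('a + 'a) set \<Rightarrow> 'a set" where
  "comp_omnians C = Inl -` C"

definition comp_choices :: "('a + 'a) set \<Rightarrow> ('a \<Rightarrow> 'a) set" where
  "comp_choices C = {g \<in> Pi\<^sub>E (comp_rets C) (\<lambda>r. parents r). comp_omnians C \<subseteq> g ` comp_rets C}"

lemma comp_rets_subset: "C \<in> Comps \<Longrightarrow> comp_rets C \<subseteq> Ret"
  using component_subset unfolding comp_rets_def BN_vertices_def by auto

lemma comp_omnians_subset: "C \<in> Comps \<Longrightarrow> comp_omnians C \<subseteq> Om"
  using component_subset unfolding comp_omnians_def BN_vertices_def by auto

lemma finite_comp_choices:
  assumes "C \<in> Comps"
  shows "finite (comp_choices C)"
proof -
  have "finite (comp_rets C)"
    using comp_rets_subset[OF assms] reticulation_in_V finite_V by (meson finite_subset subsetI)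
  then have "finite (Pi\<^sub>E (comp_rets C) (\<lambda>r. parents r))" using finite_parents by (intro finite_PiE) auto
  then show ?thesis unfolding comp_choices_def by simp
qed

lemma comp_rets_of_parent_omnian:
  assumes C: "C \<in> Comps" and o: "o' \<in> comp_omnians C" and r: "r \<in> Ret" "(o', r) \<in> A"
  shows "r \<in> comp_rets C"
proof -
  have "{Inl o', Inr r} \<in> E" using BN_edge_iff r comp_omnians_subset[OF C] o by auto
  then show ?thesis using component_closed[OF C] o by (auto simp: comp_rets_def comp_omnians_def)
qed

lemma restrict_parent_choice:
  assumes f: "f \<in> parent_choices" and C: "C \<in> Comps"
  shows "restrict f (comp_rets C) \<in> comp_choices C"
proof -
  have "restrict f (comp_rets C) \<in> Pi\<^sub>E (comp_rets C) (\<lambda>r. parents r)"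
    using f comp_rets_subset[OF C] unfolding parent_choices_def by auto
  moreover have "o' \<in> restrict f (comp_rets C) ` comp_rets C" if o: "o' \<in> comp_omnians C" for o'
  proof -
    obtain r where r: "r \<in> Ret" "o' = f r"
      using f comp_omnians_subset[OF C] o unfolding parent_choices_def by blast
    then have "(o', r) \<in> A" using f unfolding parent_choices_def by auto
    then have "r \<in> comp_rets C" using comp_rets_of_parent_omnian[OF C o r(1)] by simp
    then show ?thesis using r by simp
  qed
  ultimately show ?thesis unfolding comp_choices_def by blast
qed

definition glue_choices :: "(('a + 'a) set \<Rightarrow> 'a \<Rightarrow> 'a) \<Rightarrow> 'a \<Rightarrow> 'a" where
  "glue_choices G = (\<lambda>r\<in>Ret. G (component_of (Inr r)) r)"

lemma Inr_reticulation_in_BN: "r \<in> Ret \<Longrightarrow> Inr r \<in> W"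
  and Inl_omnian_in_BN: "o' \<in> Om \<Longrightarrow> Inl o' \<in> W"
  unfolding BN_vertices_def by auto

lemma glue_choices_in_parent_choices:
  assumes G: "G \<in> Pi\<^sub>E Comps comp_choices"
  shows "glue_choices G \<in> parent_choices"
proof -
  have "G (component_of (Inr r)) r \<in> parents r" if r: "r \<in> Ret" for r
  proof -
    let ?C = "component_of (Inr r)"
    have "?C \<in> Comps" "r \<in> comp_rets ?C"
      using Inr_reticulation_in_BN[OF r] component_of_in_components mem_component_of
      by (auto simp: comp_rets_def)
    then show ?thesis using G unfolding comp_choices_def by auto
  qed
  moreover have "o' \<in> glue_choices G ` Ret" if o: "o' \<in> Om" for o'
  proof -
    let ?C = "component_of (Inl o')"
    have C: "?C \<in> Comps" and "o' \<in> comp_omnians ?C"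
      using Inl_omnian_in_BN[OF o] component_of_in_components mem_component_of
      by (auto simp: comp_omnians_def)
    then obtain r where r: "r \<in> comp_rets ?C" "o' = G ?C r"
      using G unfolding comp_choices_def by blast
    then have "component_of (Inr r) = ?C" using component_of_eq[OF C] by (simp add: comp_rets_def)
    moreover have "r \<in> Ret" using r comp_rets_subset[OF C] by blast
    ultimately have "glue_choices G r = o'" using r unfolding glue_choices_def by simp
    then show ?thesis using \<open>r \<in> Ret\<close> by blast
  qed
  ultimately show ?thesis unfolding parent_choices_def glue_choices_def by auto
qed

lemma card_parent_choices_eq_prod: "card parent_choices = (\<Prod>C\<in>Comps. card (comp_choices C))"
proof -
  define split where "split f = (\<lambda>C\<in>Comps. restrict f (comp_rets C))" for f :: "'a \<Rightarrow> 'a"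
  have "bij_betw split parent_choices (Pi\<^sub>E Comps comp_choices)"
  proof (rule bij_betw_byWitness[where f' = glue_choices])
    show "\<forall>f\<in>parent_choices. glue_choices (split f) = f"
    proof
      fix f assume f: "f \<in> parent_choices"
      show "glue_choices (split f) = f"
      proof
        fix r show "glue_choices (split f) r = f r"
        proof (cases "r \<in> Ret")
          case True
          then have "component_of (Inr r) \<in> Comps" "r \<in> comp_rets (component_of (Inr r))"
            using Inr_reticulation_in_BN component_of_in_components mem_component_of
            by (auto simp: comp_rets_def)
          then show ?thesis using True unfolding glue_choices_def split_def by simp
        next
          case False
          then show ?thesis using f unfolding glue_choices_def parent_choices_def by auto
        qed
      qed
    qed
    show "\<forall>G\<in>Pi\<^sub>E Comps comp_choices. split (glue_choices G) = G"
    proof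
      fix G assume G: "G \<in> Pi\<^sub>E Comps comp_choices"
      show "split (glue_choices G) = G"
      proof (intro ext)
        fix C r show "split (glue_choices G) C r = G C r"
        proof (cases "C \<in> Comps \<and> r \<in> comp_rets C")
          case True
          then have "r \<in> Ret" "component_of (Inr r) = C"
            using comp_rets_subset component_of_eq by (auto simp: comp_rets_def)
          then show ?thesis using True unfolding split_def glue_choices_def by simp
        next
          case False
          show ?thesis
          proof (cases "C \<in> Comps")
            case True
            then have "G C \<in> comp_choices C" using G by (blast intro: PiE_mem)
            then have "G C \<in> Pi\<^sub>E (comp_rets C) (\<lambda>r. parents r)" unfolding comp_choices_def by blast
            moreover have "r \<notin> comp_rets C" using True False by blast
            ultimately have "G C r = undefined" by (rule PiE_arb)
            then show ?thesis using True \<open>r \<notin> comp_rets C\<close> unfolding split_def by simp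
          next
            case False
            then show ?thesis using PiE_arb[OF G False] unfolding split_def by simp
          qed
        qed
      qed
    qed
    show "split ` parent_choices \<subseteq> Pi\<^sub>E Comps comp_choices"
      using restrict_parent_choice unfolding split_def by auto
    show "glue_choices ` Pi\<^sub>E Comps comp_choices \<subseteq> parent_choices"
      using glue_choices_in_parent_choices by auto
  qed
  then have "card parent_choices = card (Pi\<^sub>E Comps comp_choices)" by (rule bij_betw_same_card)
  then show ?thesis using card_PiE[OF finite_components] by simp
qed

lemma comp_choice_covers_iff:
  assumes C: "C \<in> Comps" and g: "g \<in> Pi\<^sub>E (comp_rets C) (\<lambda>r. parents r)"
    and o: "Inl o' \<in> C"
  shows "o' \<in> g ` comp_rets C \<longleftrightarrow> (\<exists>r. {Inl o', Inr r} \<in> E \<and> g r = o')"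
proof
  assume "o' \<in> g ` comp_rets C"
  then obtain r where r: "r \<in> comp_rets C" "g r = o'" by blast
  then have "(o', r) \<in> A" using g by auto
  moreover have "o' \<in> Om" "r \<in> Ret"
    using o r(1) comp_omnians_subset[OF C] comp_rets_subset[OF C] by (auto simp: comp_omnians_def)
  ultimately show "\<exists>r. {Inl o', Inr r} \<in> E \<and> g r = o'" using r(2) BN_edge_iff by blast
next
  assume "\<exists>r. {Inl o', Inr r} \<in> E \<and> g r = o'"
  then obtain r where "{Inl o', Inr r} \<in> E" "g r = o'" by blast
  moreover then have "r \<in> comp_rets C" using component_closed[OF C o] by (simp add: comp_rets_def)
  ultimately show "o' \<in> g ` comp_rets C" by blast
qed

lemma component_right_vertex:
  assumes "C \<in> Comps" "x \<in> C" "\<not> isl x"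
  shows "x \<in> Inr ` Ret"
  using component_subset[OF assms(1)] assms(2,3) unfolding BN_vertices_def by auto

end

section \<open>Path components\<close>

locale BN_path_component = binary_phylo_network +
  fixes C ps
  assumes component: "C \<in> Comps" and path: "is_path_seq E C ps"
begin

abbreviation "n \<equiv> length ps"

lemma set_ps: "set ps = C" and distinct_ps: "distinct ps" and ps_ne: "ps \<noteq> []"
  using path unfolding is_path_seq_def by auto

lemma card_component: "card C = n"
  using set_ps distinct_ps distinct_card by metis

lemma nth_in_component: "i < n \<Longrightarrow> ps ! i \<in> C"
  using set_ps by auto

lemma nth_eq_iff: "i < n \<Longrightarrow> j < n \<Longrightarrow> ps ! i = ps ! j \<longleftrightarrow> i = j"
  using distinct_ps nth_eq_iff_index_eq by blast

lemma path_edge_iff: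
  assumes "a < n" "b < n"
  shows "{ps ! a, ps ! b} \<in> E \<longleftrightarrow> b = Suc a \<or> a = Suc b"
proof -
  have "{ps ! a, ps ! b} \<in> E \<longleftrightarrow> (\<exists>i. Suc i < n \<and> {ps ! a, ps ! b} = {ps ! i, ps ! Suc i})"
    using path nth_in_component assms unfolding is_path_seq_def by blast
  also have "\<dots> \<longleftrightarrow> b = Suc a \<or> a = Suc b"
  proof
    assume "\<exists>i. Suc i < n \<and> {ps ! a, ps ! b} = {ps ! i, ps ! Suc i}"
    then obtain i where "Suc i < n" "{ps ! a, ps ! b} = {ps ! i, ps ! Suc i}" by blast
    then show "b = Suc a \<or> a = Suc b" using nth_eq_iff assms by (auto simp: doubleton_eq_iff)
  next
    assume "b = Suc a \<or> a = Suc b"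
    then show "\<exists>i. Suc i < n \<and> {ps ! a, ps ! b} = {ps ! i, ps ! Suc i}"
      using assms by (auto simp: insert_commute)
  qed
  finally show ?thesis .
qed

lemma sides_alternate: "Suc i < n \<Longrightarrow> isl (ps ! i) \<noteq> isl (ps ! Suc i)"
  using path_edge_iff[of i "Suc i"] BN_edge_Inl_Inl BN_edge_Inr_Inr
  by (cases "ps ! i"; cases "ps ! Suc i") auto

lemma side_parity: "i < n \<Longrightarrow> isl (ps ! i) \<longleftrightarrow> (isl (ps ! 0) \<longleftrightarrow> even i)"
proof (induction i)
  case (Suc i) then show ?case using sides_alternate[of i] by auto
qed simp

lemma omnian_covered_iff:
  assumes g: "g \<in> Pi\<^sub>E (comp_rets C) (\<lambda>r. parents r)" and i: "i < n" "ps ! i = Inl o'"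
  shows "o' \<in> g ` comp_rets C \<longleftrightarrow>
           (\<exists>j<n. (j = Suc i \<or> Suc j = i) \<and> g (projr (ps ! j)) = o')"
proof -
  have "(\<exists>r. {Inl o', Inr r} \<in> E \<and> g r = o') \<longleftrightarrow>
          (\<exists>j<n. (j = Suc i \<or> Suc j = i) \<and> g (projr (ps ! j)) = o')"
  proof
    assume "\<exists>r. {Inl o', Inr r} \<in> E \<and> g r = o'"
    then obtain r where r: "{Inl o', Inr r} \<in> E" "g r = o'" by blast
    then have "Inr r \<in> C" using component_closed[OF component nth_in_component[OF i(1)]] i by simp
    then obtain j where j: "j < n" "ps ! j = Inr r" using set_ps by (auto simp: in_set_conv_nth)
    then show "\<exists>j<n. (j = Suc i \<or> Suc j = i) \<and> g (projr (ps ! j)) = o'"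
      using path_edge_iff[OF i(1) j(1)] r i by auto
  next
    assume "\<exists>j<n. (j = Suc i \<or> Suc j = i) \<and> g (projr (ps ! j)) = o'"
    then obtain j where j: "j < n" "j = Suc i \<or> Suc j = i" "g (projr (ps ! j)) = o'" by blast
    then have "\<not> isl (ps ! j)" using sides_alternate[of i] sides_alternate[of j] i by auto
    then have "ps ! j = Inr (projr (ps ! j))" by simp
    then have "{Inl o', Inr (projr (ps ! j))} \<in> E" using path_edge_iff[OF i(1) j(1)] i j(2) by metis
    then show "\<exists>r. {Inl o', Inr r} \<in> E \<and> g r = o'" using j(3) by blast
  qed
  then show ?thesis using comp_choice_covers_iff[OF component g] nth_in_component[OF i(1)] i(2) by simp
qed

lemma card_comp_choices_omnian_start:
  assumes start: "isl (ps ! 0)"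
  shows "card (comp_choices C) \<le> 1"
proof -
  define k where "k = n div 2"
  define rr where "rr j = projr (ps ! (2 * j + 1))" for j
  define om where "om j = projl (ps ! (2 * j))" for j
  have ps_rr: "ps ! (2 * j + 1) = Inr (rr j)" if "j < k" for j
  proof -
    have "2 * j + 1 < n" using that by (simp add: k_def)
    then have "\<not> isl (ps ! (2 * j + 1))" using side_parity start by simp
    then show ?thesis unfolding rr_def by (cases "ps ! (2 * j + 1)") auto
  qed
  have ps_om: "ps ! (2 * j) = Inl (om j)" if "2 * j < n" for j
  proof -
    have "isl (ps ! (2 * j))" using side_parity[OF that] start by simp
    then show ?thesis unfolding om_def by (cases "ps ! (2 * j)") auto
  qed
  have rets: "comp_rets C = rr ` {..<k}"
  proof (intro equalityI subsetI)
    fix r assume "r \<in> comp_rets C"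
    then obtain i where i: "i < n" "ps ! i = Inr r" using set_ps by (auto simp: comp_rets_def in_set_conv_nth)
    then have "odd i" using side_parity[OF i(1)] start by auto
    then obtain j where j: "i = 2 * j + 1" by (rule oddE)
    then have "j < k" "r = rr j" using i by (auto simp: rr_def k_def)
    then show "r \<in> rr ` {..<k}" by blast
  next
    fix r assume "r \<in> rr ` {..<k}"
    then obtain j where j: "j < k" "r = rr j" by blast
    then have "2 * j + 1 < n" by (simp add: k_def)
    then show "r \<in> comp_rets C" using ps_rr[OF j(1)] nth_in_component j(2) by (force simp: comp_rets_def)
  qed
  have covered: "\<exists>j<n. (j = Suc (2 * i) \<or> Suc j = 2 * i) \<and> g (projr (ps ! j)) = om i"
    if g: "g \<in> comp_choices C" and i: "2 * i < n" for g i
  proof -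
    have "om i \<in> comp_omnians C" using ps_om[OF i] nth_in_component[OF i] by (simp add: comp_omnians_def)
    then have "om i \<in> g ` comp_rets C" using g unfolding comp_choices_def by blast
    then show ?thesis using omnian_covered_iff[OF _ i ps_om[OF i]] g unfolding comp_choices_def by blast
  qed
  have distinct: "om j \<noteq> om (Suc j)" if "Suc j < k" for j
    using that ps_om[of j] ps_om[of "Suc j"] nth_eq_iff[of "2 * j" "2 * Suc j"] by (auto simp: k_def)
  have in_S: "h \<in> {g \<in> Pi\<^sub>E (rr ` {..<k}) (\<lambda>r. parents r). (0 < k \<longrightarrow> g (rr 0) = om 0) \<and>
           (\<forall>j. Suc j < k \<longrightarrow> g (rr j) = om (Suc j) \<or> g (rr (Suc j)) = om (Suc j))}"
    if h: "h \<in> comp_choices C" for h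
  proof -
    have "0 < k \<longrightarrow> h (rr 0) = om 0"
      using covered[OF h, of 0] ps_rr[of 0] ps_ne by (auto simp: k_def)
    moreover have "h (rr j) = om (Suc j) \<or> h (rr (Suc j)) = om (Suc j)" if "Suc j < k" for j
    proof -
      have "2 * Suc j < n" using that by (simp add: k_def)
      then obtain i where "i = Suc (2 * Suc j) \<or> Suc i = 2 * Suc j" "h (projr (ps ! i)) = om (Suc j)"
        using covered[OF h] by blast
      then show ?thesis using ps_rr[of j] ps_rr[of "Suc j"] that by auto
    qed
    ultimately show ?thesis using h rets unfolding comp_choices_def by auto
  qed
  have "g = g'" if "g \<in> comp_choices C" "g' \<in> comp_choices C" for g g'
    using forced_chain_choice_unique[OF distinct in_S[OF that(1)] in_S[OF that(2)]] .
  then show ?thesis using finite_comp_choices[OF component] by (simp add: card_le_Suc0_iff_eq)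
qed

end

locale BN_RR_path_component = BN_path_component +
  assumes starts_reticulation: "\<not> isl (ps ! 0)" and ends_reticulation: "\<not> isl (ps ! (n - 1))"
begin

definition half :: nat where
  "half = n div 2"

definition ret_at :: "nat \<Rightarrow> 'a" where
  "ret_at j = projr (ps ! (2 * j))"

definition omnian_at :: "nat \<Rightarrow> 'a" where
  "omnian_at j = projl (ps ! (2 * j + 1))"

lemma length_eq_odd: "n = 2 * half + 1"
proof -
  have "even (n - 1)" using side_parity[of "n - 1"] starts_reticulation ends_reticulation ps_ne by simp
  then show ?thesis using ps_ne unfolding half_def by (cases ps) auto
qed

lemma nth_even: "j \<le> half \<Longrightarrow> ps ! (2 * j) = Inr (ret_at j)"
  using side_parity[of "2 * j"] starts_reticulation length_eq_odd unfolding ret_at_def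
  by (cases "ps ! (2 * j)") auto

lemma nth_odd: "j < half \<Longrightarrow> ps ! (2 * j + 1) = Inl (omnian_at j)"
  using side_parity[of "2 * j + 1"] starts_reticulation length_eq_odd unfolding omnian_at_def
  by (cases "ps ! (2 * j + 1)") auto

lemma comp_rets_eq: "comp_rets C = ret_at ` {..half}"
proof (intro equalityI subsetI)
  fix r assume "r \<in> comp_rets C"
  then obtain i where i: "i < n" "ps ! i = Inr r" using set_ps by (auto simp: comp_rets_def in_set_conv_nth)
  then have "even i" using side_parity[OF i(1)] starts_reticulation by auto
  then obtain j where "i = 2 * j" by (rule evenE)
  then have "j \<le> half" "r = ret_at j" using i length_eq_odd by (auto simp: ret_at_def)
  then show "r \<in> ret_at ` {..half}" by blast
next
  fix r assume "r \<in> ret_at ` {..half}"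
  then obtain j where j: "j \<le> half" "r = ret_at j" by blast
  then have "2 * j < n" using length_eq_odd by simp
  then show "r \<in> comp_rets C" using nth_even[OF j(1)] nth_in_component j(2) by (force simp: comp_rets_def)
qed

lemma comp_omnians_eq: "comp_omnians C = omnian_at ` {..<half}"
proof (intro equalityI subsetI)
  fix o' assume "o' \<in> comp_omnians C"
  then obtain i where i: "i < n" "ps ! i = Inl o'" using set_ps by (auto simp: comp_omnians_def in_set_conv_nth)
  then have "odd i" using side_parity[OF i(1)] starts_reticulation by auto
  then obtain j where "i = 2 * j + 1" by (rule oddE)
  then have "j < half" "o' = omnian_at j" using i length_eq_odd by (auto simp: omnian_at_def)
  then show "o' \<in> omnian_at ` {..<half}" by blast
next
  fix o' assume "o' \<in> omnian_at ` {..<half}"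
  then obtain j where j: "j < half" "o' = omnian_at j" by blast
  then have "2 * j + 1 < n" using length_eq_odd by simp
  then show "o' \<in> comp_omnians C" using nth_odd[OF j(1)] nth_in_component j(2) by (force simp: comp_omnians_def)
qed

lemma omnian_arcs:
  assumes "j < half"
  shows "(omnian_at j, ret_at j) \<in> A" and "(omnian_at j, ret_at (Suc j)) \<in> A"
proof -
  have "{ps ! (2 * j + 1), ps ! (2 * j)} \<in> E" "{ps ! (2 * j + 1), ps ! (2 * Suc j)} \<in> E"
    using path_edge_iff[of "2 * j + 1" "2 * j"] path_edge_iff[of "2 * j + 1" "2 * Suc j"] assms length_eq_odd
    by auto
  then show "(omnian_at j, ret_at j) \<in> A" "(omnian_at j, ret_at (Suc j)) \<in> A"
    using nth_even[of j] nth_even[of "Suc j"] nth_odd[OF assms] assms BN_edge_iff by auto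
qed

lemma omnian_at_covered_iff:
  assumes g: "g \<in> Pi\<^sub>E (comp_rets C) (\<lambda>r. parents r)" and j: "j < half"
  shows "omnian_at j \<in> g ` comp_rets C \<longleftrightarrow>
           g (ret_at j) = omnian_at j \<or> g (ret_at (Suc j)) = omnian_at j"
proof -
  have pos: "2 * j < n" "2 * j + 1 < n" "Suc (2 * j + 1) < n" using j length_eq_odd by auto
  have "omnian_at j \<in> g ` comp_rets C \<longleftrightarrow>
      (\<exists>i<n. (i = Suc (2 * j + 1) \<or> Suc i = 2 * j + 1) \<and> g (projr (ps ! i)) = omnian_at j)"
    using omnian_covered_iff[OF g pos(2) nth_odd[OF j]] .
  also have "\<dots> \<longleftrightarrow> g (ret_at j) = omnian_at j \<or> g (ret_at (Suc j)) = omnian_at j"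
  proof
    assume "\<exists>i<n. (i = Suc (2 * j + 1) \<or> Suc i = 2 * j + 1) \<and> g (projr (ps ! i)) = omnian_at j"
    then show "g (ret_at j) = omnian_at j \<or> g (ret_at (Suc j)) = omnian_at j"
      using nth_even[of j] nth_even[of "Suc j"] j by auto
  next
    assume "g (ret_at j) = omnian_at j \<or> g (ret_at (Suc j)) = omnian_at j"
    then show "\<exists>i<n. (i = Suc (2 * j + 1) \<or> Suc i = 2 * j + 1) \<and> g (projr (ps ! i)) = omnian_at j"
    proof
      assume "g (ret_at j) = omnian_at j"
      then show ?thesis using pos(1) nth_even[of j] j by (intro exI[of _ "2 * j"]) simp
    next
      assume "g (ret_at (Suc j)) = omnian_at j"
      then show ?thesis using pos(3) nth_even[of "Suc j"] j by (intro exI[of _ "Suc (2 * j + 1)"]) simp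
    qed
  qed
  finally show ?thesis .
qed

lemma comp_choices_eq:
  "comp_choices C = {g \<in> Pi\<^sub>E (ret_at ` {..half}) (\<lambda>r. parents r).
     \<forall>j<half. g (ret_at j) = omnian_at j \<or> g (ret_at (Suc j)) = omnian_at j}"
  using omnian_at_covered_iff unfolding comp_choices_def comp_rets_eq[symmetric] comp_omnians_eq by blast

lemma card_comp_choices_RR_path: "card (comp_choices C) = half + 2"
  unfolding comp_choices_eq
proof (rule card_zigzag_choices)
  show "inj_on ret_at {..half}"
  proof (rule inj_onI)
    fix i j assume "i \<in> {..half}" "j \<in> {..half}" "ret_at i = ret_at j"
    then show "i = j" using nth_even[of i] nth_even[of j] nth_eq_iff[of "2 * i" "2 * j"] length_eq_odd by auto
  qed
  show "card (parents (ret_at j)) = 2" if "j \<le> half" for j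
    using card_parents_reticulation comp_rets_subset[OF component] comp_rets_eq that by blast
  show "omnian_at j \<in> parents (ret_at j)" "omnian_at j \<in> parents (ret_at (Suc j))" if "j < half" for j
    using omnian_arcs[OF that] by auto
  show "omnian_at j \<noteq> omnian_at (Suc j)" if "Suc j < half" for j
    using nth_odd[of j] nth_odd[of "Suc j"] nth_eq_iff[of "2 * j + 1" "2 * Suc j + 1"] that length_eq_odd
    by auto
qed

end

section \<open>Cycle components\<close>

locale BN_cycle_component = binary_phylo_network +
  fixes C ps
  assumes component: "C \<in> Comps" and cycle: "is_cycle_seq E C ps"
    and starts_reticulation: "\<not> isl (ps ! 0)"
begin

abbreviation "n \<equiv> length ps"

lemma length_ge_3: "3 \<le> n" and set_ps: "set ps = C" and distinct_ps: "distinct ps"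
  using cycle unfolding is_cycle_seq_def by auto

lemma Suc_mod_less: "Suc i mod n < n"
  using length_ge_3 by (intro mod_less_divisor) linarith

lemma card_component: "card C = n"
  using set_ps distinct_ps distinct_card by metis

lemma nth_in_component: "i < n \<Longrightarrow> ps ! i \<in> C"
  using set_ps by auto

lemma nth_eq_iff: "i < n \<Longrightarrow> j < n \<Longrightarrow> ps ! i = ps ! j \<longleftrightarrow> i = j"
  using distinct_ps nth_eq_iff_index_eq by blast

lemma cycle_edge_iff:
  assumes "a < n" "b < n"
  shows "{ps ! a, ps ! b} \<in> E \<longleftrightarrow> b = Suc a mod n \<or> a = Suc b mod n"
proof -
  have "{ps ! a, ps ! b} \<in> E \<longleftrightarrow> (\<exists>i<n. {ps ! a, ps ! b} = {ps ! i, ps ! (Suc i mod n)})"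
    using cycle nth_in_component assms unfolding is_cycle_seq_def by blast
  also have "\<dots> \<longleftrightarrow> b = Suc a mod n \<or> a = Suc b mod n"
  proof
    assume "\<exists>i<n. {ps ! a, ps ! b} = {ps ! i, ps ! (Suc i mod n)}"
    then obtain i where "i < n" "{ps ! a, ps ! b} = {ps ! i, ps ! (Suc i mod n)}" by blast
    moreover have "Suc i mod n < n" by (rule Suc_mod_less)
    ultimately show "b = Suc a mod n \<or> a = Suc b mod n"
      using nth_eq_iff assms by (auto simp: doubleton_eq_iff)
  next
    assume "b = Suc a mod n \<or> a = Suc b mod n"
    then show "\<exists>i<n. {ps ! a, ps ! b} = {ps ! i, ps ! (Suc i mod n)}"
      using assms by (auto simp: insert_commute)
  qed
  finally show ?thesis .
qed

lemma sides_alternate: "i < n \<Longrightarrow> isl (ps ! i) \<noteq> isl (ps ! (Suc i mod n))"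
  using cycle_edge_iff[of i "Suc i mod n"] Suc_mod_less BN_edge_Inl_Inl BN_edge_Inr_Inr
  by (cases "ps ! i"; cases "ps ! (Suc i mod n)") auto

lemma side_parity: "i < n \<Longrightarrow> isl (ps ! i) \<longleftrightarrow> odd i"
proof (induction i)
  case (Suc i)
  then show ?case using sides_alternate[of i] by simp
qed (simp add: starts_reticulation)

lemma even_length: "even n"
proof -
  have "Suc (n - 1) = n" using length_ge_3 by linarith
  then have last: "n - 1 < n" "Suc (n - 1) mod n = 0" by simp_all
  then have "isl (ps ! (n - 1))" using sides_alternate[of "n - 1"] starts_reticulation by simp
  then have "odd (n - 1)" using side_parity[OF last(1)] by simp
  then show ?thesis using \<open>Suc (n - 1) = n\<close> by (metis even_Suc)
qed

definition half :: nat where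
  "half = n div 2"

definition ret_at :: "nat \<Rightarrow> 'a" where
  "ret_at j = projr (ps ! (2 * j))"

definition omnian_at :: "nat \<Rightarrow> 'a" where
  "omnian_at j = projl (ps ! (2 * j + 1))"

lemma length_eq_double: "n = 2 * half"
  using even_length by (simp add: half_def)

lemma half_ge_2: "2 \<le> half"
  using length_ge_3 length_eq_double by linarith

lemma nth_even: "j < half \<Longrightarrow> ps ! (2 * j) = Inr (ret_at j)"
  using side_parity[of "2 * j"] length_eq_double unfolding ret_at_def
  by (cases "ps ! (2 * j)") auto

lemma nth_odd: "j < half \<Longrightarrow> ps ! (2 * j + 1) = Inl (omnian_at j)"
  using side_parity[of "2 * j + 1"] length_eq_double unfolding omnian_at_def
  by (cases "ps ! (2 * j + 1)") auto

lemma Suc_odd_mod: "j < half \<Longrightarrow> Suc (2 * j + 1) mod n = 2 * (Suc j mod half)"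
proof (cases "Suc j < half")
  case False
  moreover assume "j < half"
  ultimately have "Suc j = half" by simp
  then have "Suc (2 * j + 1) = n" "Suc j mod half = 0" using length_eq_double by auto
  then show ?thesis by simp
qed (simp add: length_eq_double)

lemma odd_eq_Suc_mod_iff: "j < half \<Longrightarrow> b < n \<Longrightarrow> 2 * j + 1 = Suc b mod n \<longleftrightarrow> b = 2 * j"
proof (cases "Suc b < n")
  case False
  moreover assume "j < half" "b < n"
  ultimately have "Suc b = n" by simp
  then show ?thesis using \<open>j < half\<close> length_eq_double by auto
qed auto

lemma comp_rets_eq: "comp_rets C = ret_at ` {..<half}"
proof (intro equalityI subsetI)
  fix r assume "r \<in> comp_rets C"
  then obtain i where i: "i < n" "ps ! i = Inr r" using set_ps by (auto simp: comp_rets_def in_set_conv_nth)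
  then have "even i" using side_parity[OF i(1)] by auto
  then obtain j where "i = 2 * j" by (rule evenE)
  then have "j < half" "r = ret_at j" using i length_eq_double by (auto simp: ret_at_def)
  then show "r \<in> ret_at ` {..<half}" by blast
next
  fix r assume "r \<in> ret_at ` {..<half}"
  then obtain j where j: "j < half" "r = ret_at j" by blast
  then have "2 * j < n" using length_eq_double by simp
  then show "r \<in> comp_rets C" using nth_even[OF j(1)] nth_in_component j(2) by (force simp: comp_rets_def)
qed

lemma comp_omnians_eq: "comp_omnians C = omnian_at ` {..<half}"
proof (intro equalityI subsetI)
  fix o' assume "o' \<in> comp_omnians C"
  then obtain i where i: "i < n" "ps ! i = Inl o'" using set_ps by (auto simp: comp_omnians_def in_set_conv_nth)
  then have "odd i" using side_parity[OF i(1)] by auto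
  then obtain j where "i = 2 * j + 1" by (rule oddE)
  then have "j < half" "o' = omnian_at j" using i length_eq_double by (auto simp: omnian_at_def)
  then show "o' \<in> omnian_at ` {..<half}" by blast
next
  fix o' assume "o' \<in> omnian_at ` {..<half}"
  then obtain j where j: "j < half" "o' = omnian_at j" by blast
  then have "2 * j + 1 < n" using length_eq_double by simp
  then show "o' \<in> comp_omnians C" using nth_odd[OF j(1)] nth_in_component j(2) by (force simp: comp_omnians_def)
qed

lemma omnian_edge_iff:
  assumes j: "j < half" and b: "b < n"
  shows "{Inl (omnian_at j), ps ! b} \<in> E \<longleftrightarrow> b = 2 * j \<or> b = 2 * (Suc j mod half)"
proof -
  have "2 * j + 1 < n" using j length_eq_double by simp
  then show ?thesis
    using cycle_edge_iff[of "2 * j + 1" b] nth_odd[OF j] Suc_odd_mod[OF j] odd_eq_Suc_mod_iff[OF j b] b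
    by auto
qed

lemma omnian_ret_edges:
  assumes j: "j < half"
  shows "{Inl (omnian_at j), Inr (ret_at j)} \<in> E" and "{Inl (omnian_at j), Inr (ret_at (Suc j mod half))} \<in> E"
proof -
  have "Suc j mod half < half" using half_ge_2 by simp
  moreover have "2 * j < n" "2 * (Suc j mod half) < n" using j half_ge_2 length_eq_double by auto
  ultimately show "{Inl (omnian_at j), Inr (ret_at j)} \<in> E" "{Inl (omnian_at j), Inr (ret_at (Suc j mod half))} \<in> E"
    using omnian_edge_iff[OF j, of "2 * j"] omnian_edge_iff[OF j, of "2 * (Suc j mod half)"]
      nth_even[OF j] nth_even[of "Suc j mod half"] by auto
qed

lemma omnian_covered_iff:
  assumes g: "g \<in> Pi\<^sub>E (comp_rets C) (\<lambda>r. parents r)" and j: "j < half"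
  shows "omnian_at j \<in> g ` comp_rets C \<longleftrightarrow>
           g (ret_at j) = omnian_at j \<or> g (ret_at (Suc j mod half)) = omnian_at j"
proof -
  have o: "Inl (omnian_at j) \<in> C"
    using nth_odd[OF j] nth_in_component[of "2 * j + 1"] j length_eq_double by simp
  have "(\<exists>r. {Inl (omnian_at j), Inr r} \<in> E \<and> g r = omnian_at j) \<longleftrightarrow>
        g (ret_at j) = omnian_at j \<or> g (ret_at (Suc j mod half)) = omnian_at j"
  proof
    assume "\<exists>r. {Inl (omnian_at j), Inr r} \<in> E \<and> g r = omnian_at j"
    then obtain r where r: "{Inl (omnian_at j), Inr r} \<in> E" "g r = omnian_at j" by blast
    then have "Inr r \<in> C" using component_closed[OF component o] by simp
    then obtain b where b: "b < n" "ps ! b = Inr r" using set_ps by (auto simp: in_set_conv_nth)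
    then have "b = 2 * j \<or> b = 2 * (Suc j mod half)" using omnian_edge_iff[OF j b(1)] r(1) by simp
    moreover have "Suc j mod half < half" using half_ge_2 by simp
    ultimately show "g (ret_at j) = omnian_at j \<or> g (ret_at (Suc j mod half)) = omnian_at j"
      using b(2) r(2) nth_even[OF j] nth_even[of "Suc j mod half"] by auto
  qed (use omnian_ret_edges[OF j] in blast)
  then show ?thesis using comp_choice_covers_iff[OF component g o] by simp
qed

lemma comp_choices_eq:
  "comp_choices C = {g \<in> Pi\<^sub>E (ret_at ` {..<half}) (\<lambda>r. parents r).
     \<forall>j<half. g (ret_at j) = omnian_at j \<or> g (ret_at (Suc j mod half)) = omnian_at j}"
  using omnian_covered_iff unfolding comp_choices_def comp_rets_eq[symmetric] comp_omnians_eq by blast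

lemma card_comp_choices_cycle: "card (comp_choices C) = 2"
  unfolding comp_choices_eq
proof (rule card_cyclic_zigzag_choices)
  show "0 < half" using half_ge_2 by simp
  show "inj_on ret_at {..<half}"
  proof (rule inj_onI)
    fix i j assume "i \<in> {..<half}" "j \<in> {..<half}" "ret_at i = ret_at j"
    then show "i = j" using nth_even[of i] nth_even[of j] nth_eq_iff[of "2 * i" "2 * j"] length_eq_double by auto
  qed
  show "card (parents (ret_at j)) = 2" if "j < half" for j
    using card_parents_reticulation comp_rets_subset[OF component] comp_rets_eq that by blast
  show "omnian_at j \<in> parents (ret_at j)" "omnian_at j \<in> parents (ret_at (Suc j mod half))"
    if "j < half" for j
    using omnian_ret_edges[OF that] BN_edge_iff by auto
  show "omnian_at j \<noteq> omnian_at (Suc j mod half)" if j: "j < half" for j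
  proof -
    have "Suc j mod half \<noteq> j"
    proof (cases "Suc j < half")
      case False
      then have "Suc j = half" using j by simp
      then show ?thesis using half_ge_2 by simp
    qed simp
    moreover have lt: "Suc j mod half < half" using half_ge_2 by simp
    moreover have "2 * (Suc j mod half) + 1 < n" "2 * j + 1 < n" using j lt length_eq_double by linarith+
    ultimately show ?thesis
      using nth_odd[OF j] nth_odd[OF lt] nth_eq_iff[of "2 * j + 1" "2 * (Suc j mod half) + 1"] by auto
  qed
qed

end

context binary_phylo_network begin

abbreviation "Cycles \<equiv> BN_cycle_components V A rho X"
abbreviation "RR_paths \<equiv> BN_RR_paths V A rho X"

lemma cycle_seq_starting_at_reticulation:
  assumes "is_cycle_seq E C ps"
  obtains qs where "is_cycle_seq E C qs" and "\<not> isl (qs ! 0)"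
proof (cases "isl (ps ! 0)")
  case True
  have "3 \<le> length ps" and set: "set ps = C" using assms by (auto simp: is_cycle_seq_def)
  then have len: "0 < length ps" "1 < length ps" "Suc 0 mod length ps = 1" by auto
  then have "ps ! 0 \<in> C" "ps ! 1 \<in> C" using set nth_mem by blast+
  then have "{ps ! 0, ps ! 1} \<in> E" using assms len unfolding is_cycle_seq_def by force
  then have "\<not> isl (ps ! 1)" using True BN_edge_Inl_Inl by (cases "ps ! 0"; cases "ps ! 1") auto
  moreover have "rotate1 ps ! 0 = ps ! 1" using nth_rotate1[OF len(1)] len(3) by simp
  ultimately show ?thesis using that is_cycle_seq_rotate1[OF assms] by metis
qed (use assms that in blast)

lemma cycle_component_card_choices:
  assumes "C \<in> Cycles"
  shows "card (comp_choices C) = 2" and "3 \<le> card C"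
proof -
  obtain ps where C: "C \<in> Comps" and ps: "is_cycle_seq E C ps"
    using assms unfolding BN_cycle_components_def by blast
  obtain qs where "is_cycle_seq E C qs" "\<not> isl (qs ! 0)"
    using cycle_seq_starting_at_reticulation[OF ps] .
  then interpret BN_cycle_component V A rho X C qs
    using C binary by unfold_locales
  show "card (comp_choices C) = 2" "3 \<le> card C"
    using card_comp_choices_cycle card_component length_ge_3 by simp_all
qed

lemma RR_path_component_card_choices:
  assumes "C \<in> RR_paths"
  shows "real (card (comp_choices C)) = (real (card C) + 3) / 2"
proof -
  obtain ps where C: "C \<in> Comps" and ps: "is_path_seq E C ps"
    and ends: "hd ps \<in> Inr ` Ret" "last ps \<in> Inr ` Ret"
    using assms unfolding BN_RR_paths_def by blast
  interpret BN_path_component V A rho X C ps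
    using C ps binary by unfold_locales (simp add: binary_network_def)
  have "\<not> isl (ps ! 0)" "\<not> isl (ps ! (n - 1))"
    using ends ps_ne by (auto simp: hd_conv_nth last_conv_nth)
  then interpret BN_RR_path_component V A rho X C ps by unfold_locales
  show ?thesis using card_comp_choices_RR_path card_component length_eq_odd by simp
qed

lemma other_component_card_choices:
  assumes C: "C \<in> Comps" and "C \<notin> Cycles" "C \<notin> RR_paths"
  shows "card (comp_choices C) \<le> 1"
proof -
  obtain ps where ps: "is_path_seq E C ps"
    using BN_component_path_or_cycle[OF C] assms(2) C unfolding BN_cycle_components_def by blast
  interpret BN_path_component V A rho X C ps
    using C ps binary by unfold_locales (simp add: binary_network_def)
  consider "isl (ps ! 0)" | "isl (ps ! (n - 1))" | "\<not> isl (ps ! 0)" "\<not> isl (ps ! (n - 1))" by blast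
  then show ?thesis
  proof cases
    case 1 then show ?thesis by (rule card_comp_choices_omnian_start)
  next
    case 2
    interpret rev: BN_path_component V A rho X C "rev ps"
      using C is_path_seq_rev[OF ps] binary by unfold_locales (simp add: binary_network_def)
    show ?thesis using rev.card_comp_choices_omnian_start 2 ps_ne by (simp add: rev_nth)
  next
    case 3
    have "0 < n" "n - 1 < n" using ps_ne by auto
    then have "ps ! 0 \<in> Inr ` Ret" "ps ! (n - 1) \<in> Inr ` Ret"
      using component_right_vertex[OF C nth_in_component] 3 by blast+
    then have "hd ps \<in> Inr ` Ret" "last ps \<in> Inr ` Ret"
      using ps_ne by (simp_all add: hd_conv_nth last_conv_nth)
    then have "C \<in> RR_paths" using C ps unfolding BN_RR_paths_def by blast
    then show ?thesis using assms(3) by simp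
  qed
qed

lemma cycles_RR_paths_disjoint: "Cycles \<inter> RR_paths = {}"
proof -
  have "C \<notin> RR_paths" if "C \<in> Cycles" for C
  proof
    assume "C \<in> RR_paths"
    then have "real (card (comp_choices C)) = (real (card C) + 3) / 2" by (rule RR_path_component_card_choices)
    then show False using cycle_component_card_choices[OF that] by simp
  qed
  then show ?thesis by blast
qed

lemma card_Sup_formula:
  assumes "Sup V A rho X \<noteq> {}"
  shows "real (card (Sup V A rho X)) = 2 ^ card Cycles * (\<Prod>P\<in>RR_paths. (real (card P) + 3) / 2)"
proof -
  let ?c = "\<lambda>C. real (card (comp_choices C))"
  have Cycles: "Cycles \<subseteq> Comps" and RR: "RR_paths \<subseteq> Comps"
    unfolding BN_cycle_components_def BN_RR_paths_def by auto
  have prod: "card (Sup V A rho X) = (\<Prod>C\<in>Comps. card (comp_choices C))"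
    using card_Sup_eq_card_parent_choices card_parent_choices_eq_prod by simp
  have "parent_choices \<noteq> {}"
    using assms tree_choice_in_parent_choices unfolding Sup_def by blast
  then have "card (Sup V A rho X) \<noteq> 0"
    using card_Sup_eq_card_parent_choices finite_parent_choices by simp
  then have nonzero: "card (comp_choices C) \<noteq> 0" if "C \<in> Comps" for C
    using prod that finite_components by auto
  have "real (card (Sup V A rho X)) = (\<Prod>C\<in>Comps. ?c C)" using prod by simp
  also have "\<dots> = (\<Prod>C\<in>Comps - (Cycles \<union> RR_paths). ?c C) * (\<Prod>C\<in>Cycles \<union> RR_paths. ?c C)"
    using Cycles RR finite_components by (intro prod.subset_diff) auto
  also have "(\<Prod>C\<in>Comps - (Cycles \<union> RR_paths). ?c C) = 1"
  proof (rule prod.neutral, rule ballI)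
    fix C assume "C \<in> Comps - (Cycles \<union> RR_paths)"
    then have "card (comp_choices C) = 1" using other_component_card_choices nonzero by fastforce
    then show "?c C = 1" by simp
  qed
  also have "(\<Prod>C\<in>Cycles \<union> RR_paths. ?c C) = (\<Prod>C\<in>Cycles. ?c C) * (\<Prod>C\<in>RR_paths. ?c C)"
    using cycles_RR_paths_disjoint Cycles RR finite_components finite_subset
    by (intro prod.union_disjoint) auto
  also have "(\<Prod>C\<in>Cycles. ?c C) = 2 ^ card Cycles"
    using cycle_component_card_choices(1) by simp
  also have "(\<Prod>C\<in>RR_paths. ?c C) = (\<Prod>P\<in>RR_paths. (real (card P) + 3) / 2)"
    using RR_path_component_card_choices by (rule prod.cong[OF refl])
  finally show ?thesis by simp
qed

end

theorem theorem9:
  fixes V :: "'a set" and A :: "('a \<times> 'a) set" and rho :: 'a and X :: "'a set"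
  assumes "binary_network V A rho X"
    and "tree_based V A rho X"
  shows "real (card (Sup V A rho X)) =
           2 ^ card (BN_cycle_components V A rho X) *
           (\<Prod>P\<in>BN_RR_paths V A rho X. (real (card P) + 3) / 2)"
proof -
  interpret binary_phylo_network V A rho X by unfold_locales (rule assms(1))
  show ?thesis using assms(2) card_Sup_formula unfolding tree_based_def by blast
qed

end
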